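(* Let $\psi^*$ be a nondecreasing function on $[-\pi,\pi]$, let $\psi$ be the Stieltjes (Borel) measure on $\partial\mathbb{D}$ generated by $\psi^*$, let $0\le\gamma<1$ and $\zeta_0\in\partial\mathbb{D}$. For a Borel measure $\chi$ on $\partial\mathbb{D}$ put $h_\chi(z)=\int_{\partial\mathbb{D}}\frac{\zeta+z}{\zeta-z}\,d\chi(\zeta)$, $z\in\mathbb{D}$ (so $h_\psi(z)=\int_{-\pi}^{\pi}\frac{e^{it}+z}{e^{it}-z}\,d\psi^*(t)$). The following conditions are equivalent: 1) for every Borel measure $\chi$ on $\partial\mathbb{D}$ with $\chi\prec\psi$ and every $\sigma>1$ there exists a constant $K=K(\gamma,\sigma,\psi)>0$ such that $\sup_{z\in S^*_\sigma(\zeta_0)}|D^{-\gamma}h_\chi(z)|<K$; 2) for every Borel measure $\chi$ on $\partial\mathbb{D}$ with $\chi\prec\psi$ and every $\sigma>1$ there exists a constant $K=K(\gamma,\sigma,\psi)>0$ such that $\sup_{z\in S^*_\sigma(\zeta_0)}|D^{-\gamma}\operatorname{Im}h_\chi(z)|<K$; 3) $$\int_{\partial\mathbb{D}}\frac{d\psi(\zeta)}{|\zeta_0-\zeta|^{1-\gamma}}<\infty.$$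
   Context: $\mathbb{D}=\{|z|<1\}$. For Borel measures $\chi,\psi$ on $\partial\mathbb{D}$, $\chi\prec\psi$ means $\chi(M)\le\psi(M)$ for every Borel set $M\subset\partial\mathbb{D}$. Fractional integral: for $\gamma>0$, $D^{-\gamma}u(z)=\frac1{\Gamma(\gamma)}\int_0^{|z|}(|z|-x)^{\gamma-1}u(xz/|z|)\,dx$ (in the radial variable), $D^0u=u$. Stolz angle: $S_\sigma(\zeta)=\{z\in\mathbb{D}:|1-z\bar\zeta|\le\sigma(1-|z|)\}$, $S^*_\sigma(\zeta)=S_\sigma(\zeta)\cap\{|z-\zeta|<\tfrac12\}$. *)

theory Defs
  imports "HOL-Analysis.Analysis"
begin

text \<open>Right-continuous normalisation of a nondecreasing function on [-pi,pi],
  extended by constants outside; its Lebesgue--Stieltjes measure is the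
  Stieltjes measure of psi* on [-pi,pi].\<close>
definition stieltjes_normalize :: "(real \<Rightarrow> real) \<Rightarrow> real \<Rightarrow> real" where
  "stieltjes_normalize psi t =
     (if t < -pi then psi (-pi)
      else if t < pi then Lim (at_right t) psi
      else psi pi)"

definition circle_stieltjes_measure :: "(real \<Rightarrow> real) \<Rightarrow> complex measure" where
  "circle_stieltjes_measure psi =
     distr (interval_measure (stieltjes_normalize psi)) borel cis"

text \<open>A (positive) Borel measure on the unit circle, viewed as a Borel
  measure on the complex plane concentrated on the circle.\<close>
definition circle_borel_measure :: "complex measure \<Rightarrow> bool" where
  "circle_borel_measure chi \<longleftrightarrow>
     sets chi = sets borel \<and> emeasure chi (UNIV - sphere 0 1) = 0"

definition measure_prec :: "complex measure \<Rightarrow> complex measure \<Rightarrow> bool" where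
  "measure_prec chi \<psi> \<longleftrightarrow>
     (\<forall>M \<in> sets borel. M \<subseteq> sphere 0 1 \<longrightarrow> emeasure chi M \<le> emeasure \<psi> M)"

definition herglotz :: "complex measure \<Rightarrow> complex \<Rightarrow> complex" where
  "herglotz chi z = integral\<^sup>L chi (\<lambda>\<zeta>. (\<zeta> + z) / (\<zeta> - z))"

definition frac_integral :: "real \<Rightarrow> (complex \<Rightarrow> 'a::euclidean_space) \<Rightarrow> complex \<Rightarrow> 'a" where
  "frac_integral \<gamma> u z =
     (if \<gamma> = 0 then u z
      else (1 / Gamma \<gamma>) *\<^sub>R
        integral {0..cmod z}
          (\<lambda>x. ((cmod z - x) powr (\<gamma> - 1)) *\<^sub>R u (of_real x * z / of_real (cmod z))))"

definition stolz :: "real \<Rightarrow> complex \<Rightarrow> complex set" where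
  "stolz \<sigma> \<zeta> = {z. cmod z < 1 \<and> cmod (1 - z * cnj \<zeta>) \<le> \<sigma> * (1 - cmod z)}"

definition stolz_star :: "real \<Rightarrow> complex \<Rightarrow> complex set" where
  "stolz_star \<sigma> \<zeta> = stolz \<sigma> \<zeta> \<inter> {z. cmod (z - \<zeta>) < 1/2}"

end

theory Submission
  imports Defs "HOL-Real_Asymp.Real_Asymp"
begin

text \<open>
  Only finiteness of \<open>\<psi>\<close> and its concentration on the circle matter, so the argument is made
  for an arbitrary finite Borel measure \<open>\<psi>\<close> on the circle. Writing
  \<open>K\<^sub>\<zeta>(w) = (\<zeta> + w) / (\<zeta> - w)\<close>, Fubini gives
  \<open>D\<^sup>-\<^sup>\<gamma> h\<^sub>\<chi>(z) = \<integral> D\<^sup>-\<^sup>\<gamma> K\<^sub>\<zeta>(z) d\<chi>(\<zeta>)\<close>, and \<open>D\<^sup>-\<^sup>\<gamma>\<close> commutes with \<open>Im\<close>,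
  which gives 1) \<open>\<Longrightarrow>\<close> 2). On a Stolz angle at \<open>\<zeta>\<^sub>0\<close> every point \<open>w\<close> of the segment
  \<open>[0, z]\<close> satisfies \<open>|\<zeta>\<^sub>0 - \<zeta>| \<le> (1 + \<sigma>) |\<zeta> - w|\<close> and \<open>|z| - |w| \<le> |\<zeta> - w|\<close>, whence
  \<open>|D\<^sup>-\<^sup>\<gamma> K\<^sub>\<zeta>(z)| \<le> C |\<zeta>\<^sub>0 - \<zeta>|\<^sup>\<gamma>\<^sup>-\<^sup>1\<close>; integrating against \<open>\<chi> \<le> \<psi>\<close> gives 3) \<open>\<Longrightarrow>\<close> 1).

  For 2) \<open>\<Longrightarrow>\<close> 3), if the integral diverges it diverges on one of the two short arcs next
  to \<open>\<zeta>\<^sub>0\<close>. Take \<open>\<chi>\<close> the restriction of \<open>\<psi>\<close> to that arc and test at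
  \<open>z\<^sub>t = (1 - t/2) u\<^sub>t\<close>, where \<open>u\<^sub>t\<close> is the point of the circle at distance about \<open>t\<close>
  from \<open>\<zeta>\<^sub>0\<close> on the other side; these points lie in the fixed Stolz angle with \<open>\<sigma> = 5\<close>.
  Then \<open>Im K\<^sub>\<zeta>\<close> has constant sign along \<open>[0, z\<^sub>t]\<close> for all \<open>\<zeta>\<close> of the arc and is
  \<open>\<ge> 1 / (18 |\<zeta> - u\<^sub>t|)\<close> on its last piece of length \<open>|\<zeta> - u\<^sub>t|\<close>, so
  \<open>|D\<^sup>-\<^sup>\<gamma> Im h\<^sub>\<chi>(z\<^sub>t)| \<ge> c \<integral> (|\<zeta>\<^sub>0 - \<zeta>| + 3t/2)\<^sup>\<gamma>\<^sup>-\<^sup>1 d\<chi>(\<zeta>)\<close>, and monotone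
  convergence as \<open>t \<rightarrow> 0\<close> bounds the divergent integral.
\<close>

section \<open>The Stieltjes measure on the circle\<close>

definition right_inf :: "(real \<Rightarrow> real) \<Rightarrow> real \<Rightarrow> real" where
  "right_inf psi t = Inf (psi ` ({t<..} \<inter> {-pi..pi}))"

lemma right_inf_bounds:
  assumes m: "mono_on {-pi..pi} psi" and t: "t < pi"
  shows "psi (-pi) \<le> right_inf psi t" "right_inf psi t \<le> psi pi"
proof -
  have ne: "{t<..} \<inter> {-pi..pi} \<noteq> {}" using t by auto
  show "psi (-pi) \<le> right_inf psi t" unfolding right_inf_def
    using ne by (intro cInf_greatest) (auto intro!: mono_onD[OF m])
  show "right_inf psi t \<le> psi pi" unfolding right_inf_def
    using t by (intro cInf_lower) (auto intro!: bdd_belowI2[where m="psi (-pi)"] mono_onD[OF m])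
qed

lemma right_inf_le:
  assumes m: "mono_on {-pi..pi} psi" and "t < y" "y \<in> {-pi..pi}"
  shows "right_inf psi t \<le> psi y"
  unfolding right_inf_def using assms
  by (intro cInf_lower) (auto intro!: bdd_belowI2[where m="psi (-pi)"] mono_onD[OF m])

lemma right_inf_mono:
  assumes m: "mono_on {-pi..pi} psi" and "s \<le> t" "t < pi"
  shows "right_inf psi s \<le> right_inf psi t"
  unfolding right_inf_def using assms
  by (intro cInf_superset_mono) (auto intro!: bdd_belowI2[where m="psi (-pi)"] mono_onD[OF m])

lemma tendsto_right_inf:
  assumes m: "mono_on {-pi..pi} psi" and t: "-pi \<le> t" "t < pi"
  shows "(psi \<longlongrightarrow> right_inf psi t) (at_right t)"
proof -
  have "(psi \<longlongrightarrow> right_inf psi t) (at t within ({t<..} \<inter> {-pi..pi}))"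
    unfolding right_inf_def
    by (rule Lim_right_bound[where K="psi (-pi)"]) (auto intro: mono_onD[OF m])
  moreover have "at t within ({t<..} \<inter> {-pi..pi}) = at t within {t<..}"
    by (rule at_within_nhd[where S="{-pi-1<..<pi}"]) (use t in auto)
  ultimately show ?thesis by simp
qed

lemma stieltjes_normalize_eq:
  assumes m: "mono_on {-pi..pi} psi"
  shows "stieltjes_normalize psi t =
           (if t < -pi then psi (-pi) else if t < pi then right_inf psi t else psi pi)"
  unfolding stieltjes_normalize_def
  using tendsto_Lim[OF trivial_limit_at_right_real tendsto_right_inf[OF m]] by auto

lemma mono_stieltjes_normalize:
  assumes m: "mono_on {-pi..pi} psi"
  shows "mono (stieltjes_normalize psi)"
proof (rule monoI)
  fix s t :: real assume st: "s \<le> t"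
  have "psi (-pi) \<le> psi pi" by (auto intro!: mono_onD[OF m])
  then show "stieltjes_normalize psi s \<le> stieltjes_normalize psi t"
    unfolding stieltjes_normalize_eq[OF m]
    using st right_inf_bounds[OF m, of s] right_inf_bounds[OF m, of t] right_inf_mono[OF m, of s t]
    by auto
qed

lemma continuous_at_right_stieltjes_normalize:
  assumes m: "mono_on {-pi..pi} psi"
  shows "continuous (at_right a) (stieltjes_normalize psi)"
proof -
  let ?F = "stieltjes_normalize psi"
  have "\<exists>d>0. ?F (a + d) - ?F a < e" if e: "e > 0" for e
  proof -
    consider "a < -pi" | "pi \<le> a" | "-pi \<le> a" "a < pi" by linarith
    then show ?thesis
    proof cases
      case 1
      then have "a + (-pi - a)/2 < -pi" by (simp add: field_simps)
      then show ?thesis using 1 e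
        by (intro exI[of _ "(-pi - a)/2"]) (auto simp: stieltjes_normalize_eq[OF m])
    next
      case 2
      then have "\<not> a < -pi" "\<not> a < pi" "\<not> a + 1 < -pi" "\<not> a + 1 < pi"
        using pi_gt_zero by linarith+
      then show ?thesis using e
        by (intro exI[of _ 1]) (auto simp: stieltjes_normalize_eq[OF m])
    next
      case 3
      have "right_inf psi a < right_inf psi a + e" using e by simp
      then obtain y where y: "a < y" "y \<in> {-pi..pi}" "psi y < right_inf psi a + e"
        using cInf_lessD[of "psi ` ({a<..} \<inter> {-pi..pi})"] 3 unfolding right_inf_def by fastforce
      define d where "d = (y - a) / 2"
      have d: "d > 0" "a + d < y" using y by (auto simp: d_def field_simps)
      have "?F (a + d) = right_inf psi (a + d)" using d y 3 by (auto simp: stieltjes_normalize_eq[OF m])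
      also have "\<dots> \<le> psi y" using right_inf_le[OF m d(2) y(2)] .
      finally show ?thesis using y d 3
        by (intro exI[of _ d]) (auto simp: stieltjes_normalize_eq[OF m])
    qed
  qed
  moreover have "\<And>x y. x \<le> y \<Longrightarrow> ?F x \<le> ?F y"
    using mono_stieltjes_normalize[OF m] by (auto dest: monoD)
  ultimately show ?thesis using continuous_at_right_real_increasing by blast
qed

lemma measurable_cis_interval_measure [measurable]: "cis \<in> borel_measurable (interval_measure F)"
  by (subst measurable_cong_sets[OF sets_interval_measure refl])
    (intro borel_measurable_continuous_onI continuous_intros)

lemma emeasure_circle_stieltjes_measure_UNIV:
  assumes m: "mono_on {-pi..pi} psi"
  shows "emeasure (circle_stieltjes_measure psi) UNIV = ennreal (psi pi - psi (-pi))"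
proof -
  let ?F = "stieltjes_normalize psi"
  let ?M = "interval_measure ?F"
  let ?I = "\<lambda>n::nat. {- real n <.. real n}"
  have "(\<lambda>n. emeasure ?M (?I n)) \<longlonglongrightarrow> emeasure ?M (\<Union>n. ?I n)"
    by (rule Lim_emeasure_incseq) (auto simp: incseq_def)
  moreover have "(\<Union>n. ?I n) = UNIV"
  proof safe
    fix x :: real
    obtain n :: nat where "\<bar>x\<bar> < n" using reals_Archimedean2 by blast
    then show "x \<in> (\<Union>n. ?I n)" by (intro UN_I[of n]) auto
  qed auto
  moreover have "(\<lambda>n. emeasure ?M (?I n)) \<longlonglongrightarrow> ennreal (psi pi - psi (-pi))"
  proof (rule tendsto_eventually)
    show "\<forall>\<^sub>F n in sequentially. emeasure ?M (?I n) = ennreal (psi pi - psi (-pi))"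
      using eventually_ge_at_top[of "4::nat"]
    proof eventually_elim
      case (elim n)
      then have "pi < real n" using pi_less_4 by linarith
      moreover have "emeasure ?M (?I n) = ?F (real n) - ?F (- real n)"
        using mono_stieltjes_normalize[OF m] continuous_at_right_stieltjes_normalize[OF m]
        by (intro emeasure_interval_measure_Ioc) (auto dest: monoD)
      ultimately show ?case using pi_gt_zero by (simp add: stieltjes_normalize_eq[OF m])
    qed
  qed
  ultimately have "emeasure ?M UNIV = ennreal (psi pi - psi (-pi))"
    using LIMSEQ_unique by metis
  then show ?thesis unfolding circle_stieltjes_measure_def
    by (subst emeasure_distr) auto
qed

section \<open>Finite measures on the circle\<close>

definition finite_circle_measure :: "complex measure \<Rightarrow> bool" where
  "finite_circle_measure M \<longleftrightarrow> finite_measure M \<and> circle_borel_measure M"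

lemma finite_circle_measure_circle_stieltjes_measure:
  assumes "mono_on {-pi..pi} psi"
  shows "finite_circle_measure (circle_stieltjes_measure psi)"
  unfolding finite_circle_measure_def circle_borel_measure_def
  using emeasure_circle_stieltjes_measure_UNIV[OF assms]
  by (auto intro!: finite_measureI simp: circle_stieltjes_measure_def emeasure_distr vimage_def)

lemma AE_circle:
  assumes "circle_borel_measure M"
  shows "AE \<zeta> in M. \<zeta> \<in> sphere 0 1"
proof (rule AE_I')
  show "UNIV - sphere 0 1 \<in> null_sets M"
    using assms by (auto simp: circle_borel_measure_def null_sets_def)
qed auto

lemma measure_prec_imp_le:
  assumes chi: "circle_borel_measure chi" and psi: "sets \<psi> = sets borel"
    and prec: "measure_prec chi \<psi>"
  shows "chi \<le> \<psi>"
proof -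
  let ?S = "sphere (0::complex) 1"
  have s: "sets chi = sets borel" and n: "emeasure chi (UNIV - ?S) = 0"
    using chi by (auto simp: circle_borel_measure_def)
  have "emeasure chi A \<le> emeasure \<psi> A" if A: "A \<in> sets borel" for A
  proof -
    have "emeasure chi A \<le> emeasure chi (A \<inter> ?S) + emeasure chi (A - ?S)"
      by (rule order_trans[OF emeasure_mono emeasure_subadditive]) (use A s in auto)
    also have "emeasure chi (A - ?S) \<le> emeasure chi (UNIV - ?S)"
      by (rule emeasure_mono) (use s in auto)
    also have "emeasure chi (A \<inter> ?S) \<le> emeasure \<psi> (A \<inter> ?S)"
      using prec A by (auto simp: measure_prec_def)
    also have "\<dots> \<le> emeasure \<psi> A" by (rule emeasure_mono) (use A psi in auto)
    finally show ?thesis using n by simp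
  qed
  then show ?thesis using s psi by (simp add: le_measure)
qed

lemma finite_circle_measure_if_prec:
  assumes chi: "circle_borel_measure chi" and psi: "finite_circle_measure \<psi>"
    and prec: "measure_prec chi \<psi>"
  shows "finite_circle_measure chi"
proof -
  have s: "sets chi = sets borel" and s': "sets \<psi> = sets borel"
    using chi psi by (auto simp: circle_borel_measure_def finite_circle_measure_def)
  have "emeasure chi UNIV \<le> emeasure \<psi> UNIV"
    using le_measureD3[OF measure_prec_imp_le[OF chi s' prec]] s s' by simp
  also have "\<dots> < \<infinity>"
    using psi finite_measure.emeasure_finite[of \<psi> UNIV] by (simp add: finite_circle_measure_def less_top)
  finally show ?thesis
    using chi s by (auto simp: finite_circle_measure_def sets_eq_imp_space_eq intro!: finite_measureI)
qed

lemma density_indicator_circle_measure: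
  assumes psi: "circle_borel_measure \<psi>" and A: "A \<in> sets borel"
  defines "chi \<equiv> density \<psi> (indicator A)"
  shows "circle_borel_measure chi" and "measure_prec chi \<psi>" and "AE \<zeta> in chi. \<zeta> \<in> A"
proof -
  have s: "sets \<psi> = sets borel" using psi by (simp add: circle_borel_measure_def)
  have sc: "sets chi = sets borel" using s by (simp add: chi_def)
  have em: "emeasure chi M = (\<integral>\<^sup>+ x. indicator A x * indicator M x \<partial>\<psi>)" if "M \<in> sets borel" for M
    unfolding chi_def by (rule emeasure_density) (use that A s in \<open>auto simp: measurable_cong_sets[OF s refl]\<close>)
  have le: "emeasure chi M \<le> emeasure \<psi> M" if M: "M \<in> sets borel" for M
  proof -
    have "emeasure chi M \<le> (\<integral>\<^sup>+ x. indicator M x \<partial>\<psi>)"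
      unfolding em[OF M] by (intro nn_integral_mono) (auto simp: indicator_def)
    also have "\<dots> = emeasure \<psi> M" using M s by simp
    finally show ?thesis .
  qed
  have "UNIV - sphere 0 1 \<in> sets (borel :: complex measure)"
    by (intro borel_open open_Diff open_UNIV closed_sphere)
  then show "circle_borel_measure chi"
    using psi sc le by (fastforce simp: circle_borel_measure_def)
  show "measure_prec chi \<psi>" unfolding measure_prec_def using le by blast
  have "UNIV - A \<in> sets borel" using A by auto
  then have "emeasure chi (UNIV - A) = 0"
  proof (subst em)
    show "(\<integral>\<^sup>+ x. indicator A x * indicator (UNIV - A) x \<partial>\<psi>) = 0"
      by (subst nn_integral_cong[where v="\<lambda>_. 0"]) (auto split: split_indicator)
  qed
  then show "AE \<zeta> in chi. \<zeta> \<in> A"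
    using sc A by (intro AE_I'[of "UNIV - A"]) (auto simp: null_sets_def)
qed

section \<open>The Riemann--Liouville weight\<close>

lemma DERIV_powr_diff:
  fixes \<rho> b x :: real
  assumes "x < \<rho>"
  shows "((\<lambda>x. (\<rho> - x) powr b) has_real_derivative (- b * (\<rho> - x) powr (b - 1))) (at x)"
  using DERIV_fun_powr[of "\<lambda>x. \<rho> - x" "-1" x b] assms
  by (auto intro!: derivative_eq_intros)

lemma has_integral_powr_diff:
  fixes \<gamma> \<rho> b :: real
  assumes g: "0 < \<gamma>" and b: "0 \<le> b"
  shows "((\<lambda>x. (\<rho> - x) powr (\<gamma> - 1)) has_integral (b powr \<gamma> / \<gamma>)) {\<rho> - b..\<rho>}"
proof -
  let ?f = "\<lambda>x. - ((\<rho> - x) powr \<gamma>) / \<gamma>"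
  have "((\<lambda>x. (\<rho> - x) powr (\<gamma> - 1)) has_integral (?f \<rho> - ?f (\<rho> - b))) {\<rho> - b..\<rho>}"
  proof (rule fundamental_theorem_of_calculus_interior)
    show "\<rho> - b \<le> \<rho>" using b by simp
    show "continuous_on {\<rho> - b..\<rho>} ?f"
      using g by (intro continuous_intros continuous_on_powr') auto
    fix x assume x: "x \<in> {\<rho> - b<..<\<rho>}"
    have "(?f has_real_derivative (- (- \<gamma> * (\<rho> - x) powr (\<gamma> - 1)) / \<gamma>)) (at x)"
      using DERIV_cmult[OF DERIV_powr_diff, of x \<rho> "-1/\<gamma>" \<gamma>] x by (simp add: field_simps)
    then show "(?f has_vector_derivative (\<rho> - x) powr (\<gamma> - 1)) (at x)"
      using g by (simp add: has_real_derivative_iff_has_vector_derivative)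
  qed
  then show ?thesis using g by simp
qed

lemma has_integral_powr_diff_below:
  fixes \<gamma> \<rho> a c :: real
  assumes g: "\<gamma> < 1" and ac: "a \<le> c" "c < \<rho>"
  shows "((\<lambda>x. (\<rho> - x) powr (\<gamma> - 2)) has_integral
           (((\<rho> - c) powr (\<gamma> - 1) - (\<rho> - a) powr (\<gamma> - 1)) / (1 - \<gamma>))) {a..c}"
proof -
  let ?f = "\<lambda>x. (\<rho> - x) powr (\<gamma> - 1) / (1 - \<gamma>)"
  have "((\<lambda>x. (\<rho> - x) powr (\<gamma> - 2)) has_integral (?f c - ?f a)) {a..c}"
  proof (rule fundamental_theorem_of_calculus_interior)
    show "a \<le> c" using ac by simp
    show "continuous_on {a..c} ?f"
      using ac g by (intro continuous_intros) auto
    fix x assume x: "x \<in> {a<..<c}"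
    have "(?f has_real_derivative (- (\<gamma> - 1) * (\<rho> - x) powr (\<gamma> - 1 - 1)) / (1 - \<gamma>)) (at x)"
      using DERIV_cmult[OF DERIV_powr_diff, of x \<rho> "1/(1-\<gamma>)" "\<gamma> - 1"] x ac
      by (simp add: field_simps)
    moreover have "- (\<gamma> - 1) * y / (1 - \<gamma>) = y" for y using g by (simp add: field_simps)
    ultimately show "(?f has_vector_derivative (\<rho> - x) powr (\<gamma> - 2)) (at x)"
      by (simp add: has_real_derivative_iff_has_vector_derivative)
  qed
  then show ?thesis by (simp add: diff_divide_distrib)
qed

lemma powr_diff_over_max_integral_le:
  fixes \<gamma> \<rho> d :: real
  assumes g: "0 < \<gamma>" "\<gamma> < 1" and d: "0 < d" and r: "0 \<le> \<rho>"
  shows "\<exists>I. ((\<lambda>x. (\<rho> - x) powr (\<gamma> - 1) / max d (\<rho> - x)) has_integral I) {0..\<rho>}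
             \<and> I \<le> d powr (\<gamma> - 1) * (1 / \<gamma> + 1 / (1 - \<gamma>))"
proof -
  let ?M = "\<lambda>x. (\<rho> - x) powr (\<gamma> - 1) / max d (\<rho> - x)"
  have dd: "d powr \<gamma> / \<gamma> * (1 / d) = d powr (\<gamma> - 1) / \<gamma>"
    using d by (simp add: powr_diff)
  have split: "d powr (\<gamma> - 1) * (1 / \<gamma> + 1 / (1 - \<gamma>)) = d powr (\<gamma> - 1) / \<gamma> + d powr (\<gamma> - 1) / (1 - \<gamma>)"
    by (simp add: distrib_left)
  have pos: "0 \<le> d powr (\<gamma> - 1) / (1 - \<gamma>)" using g by simp
  have near: "(?M has_integral (b powr \<gamma> / \<gamma> * (1 / d))) {\<rho> - b..\<rho>}"
    if "0 \<le> b" "b \<le> d" for b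
  proof -
    have "((\<lambda>x. (\<rho> - x) powr (\<gamma> - 1) * (1 / d)) has_integral (b powr \<gamma> / \<gamma> * (1 / d))) {\<rho> - b..\<rho>}"
      by (rule has_integral_mult_left[OF has_integral_powr_diff[OF g(1) that(1)]])
    then show ?thesis by (rule has_integral_eq[rotated]) (use that in auto)
  qed
  show ?thesis
  proof (cases "\<rho> \<le> d")
    case True
    have "\<rho> powr \<gamma> / \<gamma> * (1 / d) \<le> d powr \<gamma> / \<gamma> * (1 / d)"
      using True g d r by (intro mult_right_mono divide_right_mono powr_mono2) auto
    then show ?thesis using near[OF r True] dd split pos
      by (intro exI[of _ "\<rho> powr \<gamma> / \<gamma> * (1 / d)"]) simp
  next
    case False
    have far: "(?M has_integral ((d powr (\<gamma> - 1) - \<rho> powr (\<gamma> - 1)) / (1 - \<gamma>))) {0..\<rho> - d}"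
    proof (rule has_integral_eq[rotated])
      show "((\<lambda>x. (\<rho> - x) powr (\<gamma> - 2)) has_integral ((d powr (\<gamma> - 1) - \<rho> powr (\<gamma> - 1)) / (1 - \<gamma>))) {0..\<rho> - d}"
        using has_integral_powr_diff_below[of \<gamma> 0 "\<rho> - d" \<rho>] g d False by simp
      fix x assume "x \<in> {0..\<rho> - d}"
      then have "max d (\<rho> - x) = \<rho> - x" "\<rho> - x > 0" using d by auto
      then show "(\<rho> - x) powr (\<gamma> - 2) = ?M x"
        using powr_diff[of "\<rho> - x" "\<gamma> - 1" 1] by simp
    qed
    have "(?M has_integral ((d powr (\<gamma> - 1) - \<rho> powr (\<gamma> - 1)) / (1 - \<gamma>) + d powr \<gamma> / \<gamma> * (1 / d))) {0..\<rho>}"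
      by (rule has_integral_combine[OF _ _ far near]) (use d False in auto)
    moreover have "(d powr (\<gamma> - 1) - \<rho> powr (\<gamma> - 1)) / (1 - \<gamma>) \<le> d powr (\<gamma> - 1) / (1 - \<gamma>)"
      using g by (intro divide_right_mono) auto
    ultimately show ?thesis using dd split by (intro exI) auto
  qed
qed

lemma set_integrable_powr_diff_scaleR:
  fixes f :: "real \<Rightarrow> 'b::{banach, second_countable_topology}"
  assumes g: "0 < \<gamma>" and r: "0 \<le> \<rho>" and f: "f \<in> borel_measurable lborel"
    and bnd: "\<And>x. x \<in> {0..\<rho>} \<Longrightarrow> norm (f x) \<le> B"
  shows "set_integrable lborel {0..\<rho>} (\<lambda>x. (\<rho> - x) powr (\<gamma> - 1) *\<^sub>R f x)"
proof -
  let ?w = "\<lambda>x. (\<rho> - x) powr (\<gamma> - 1)"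
  have "((\<lambda>x. (\<rho> - x) powr (\<gamma> - 1)) has_integral (\<rho> powr \<gamma> / \<gamma>)) {0..\<rho>}"
    using has_integral_powr_diff[OF g r, of \<rho>] by simp
  then have "?w absolutely_integrable_on {0..\<rho>}"
    by (intro nonnegative_absolutely_integrable_1) (auto simp: integrable_on_def)
  then have w: "integrable lborel (\<lambda>x. indicator {0..\<rho>} x * ?w x)"
    by (simp add: set_integrable_def integrable_completion[symmetric])
  show ?thesis
    unfolding set_integrable_def
  proof (rule Bochner_Integration.integrable_bound[OF integrable_mult_left[OF w, of B]])
    show "(\<lambda>x. indicator {0..\<rho>} x *\<^sub>R ?w x *\<^sub>R f x) \<in> borel_measurable lborel"
      using f by measurable
    show "AE x in lborel. norm (indicator {0..\<rho>} x *\<^sub>R ?w x *\<^sub>R f x) \<le> norm (indicator {0..\<rho>} x * ?w x * B)"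
    proof (rule AE_I2)
      fix x
      show "norm (indicator {0..\<rho>} x *\<^sub>R ?w x *\<^sub>R f x) \<le> norm (indicator {0..\<rho>} x * ?w x * B)"
      proof (cases "x \<in> {0..\<rho>}")
        case True
        then have "norm (f x) * ?w x \<le> \<bar>B\<bar> * ?w x"
          using bnd by (intro mult_right_mono) force+
        then show ?thesis using True by (simp add: abs_mult mult.commute)
      qed simp
    qed
  qed
qed

lemma integrable_powr_diff_pair:
  fixes M :: "complex measure" and g :: "real \<Rightarrow> complex \<Rightarrow> 'b::euclidean_space"
  assumes M: "finite_circle_measure M"
    and meas: "(\<lambda>p. g (fst p) (snd p)) \<in> borel_measurable borel"
    and bnd: "\<And>x \<zeta>. x \<in> {0..\<rho>} \<Longrightarrow> \<zeta> \<in> sphere 0 1 \<Longrightarrow> norm (g x \<zeta>) \<le> B"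
    and pos: "0 < \<gamma>" and r: "0 \<le> \<rho>"
  shows "integrable (lborel \<Otimes>\<^sub>M M) (\<lambda>(x, \<zeta>). indicator {0..\<rho>} x *\<^sub>R ((\<rho> - x) powr (\<gamma> - 1) *\<^sub>R g x \<zeta>))"
proof -
  interpret finite_measure M using M by (simp add: finite_circle_measure_def)
  interpret P: pair_sigma_finite lborel M
    by (intro pair_sigma_finite.intro) (simp_all add: lborel.sigma_finite_measure_axioms sigma_finite_measure_axioms)
  have sM: "sets M = sets borel"
    using M by (simp add: finite_circle_measure_def circle_borel_measure_def)
  have AEs: "AE \<zeta> in M. \<zeta> \<in> sphere 0 1"
    using M by (intro AE_circle) (simp add: finite_circle_measure_def)
  let ?W = "\<lambda>x. indicator {0..\<rho>} x * (\<rho> - x) powr (\<gamma> - 1)"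
  let ?C = "B * measure M (space M)"
  define F where "F = (\<lambda>x \<zeta>. indicator {0..\<rho>} x *\<^sub>R ((\<rho> - x) powr (\<gamma> - 1) *\<^sub>R g x \<zeta>))"
  have wi: "integrable lborel ?W"
    using set_integrable_powr_diff_scaleR[OF pos r, of "\<lambda>_. 1::real" 1] by (simp add: set_integrable_def)
  have setsP: "sets (lborel \<Otimes>\<^sub>M M) = sets (borel \<Otimes>\<^sub>M borel)"
    by (rule sets_pair_measure_cong) (simp_all add: sM)
  have gm: "(\<lambda>p. g (fst p) (snd p)) \<in> borel_measurable (lborel \<Otimes>\<^sub>M M)"
    using meas unfolding measurable_cong_sets[OF setsP refl] borel_prod .
  then have "(\<lambda>p. F (fst p) (snd p)) \<in> borel_measurable (lborel \<Otimes>\<^sub>M M)"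
    unfolding F_def by measurable
  then have Fm: "case_prod F \<in> borel_measurable (lborel \<Otimes>\<^sub>M M)"
    by (simp add: case_prod_beta')
  have gint: "integrable M (g x)" if "x \<in> {0..\<rho>}" for x
    using measurable_compose[OF measurable_Pair1'[of x lborel M] gm] AEs bnd that
    by (intro integrable_const_bound[where B=B]) auto
  have nb: "(\<integral>\<zeta>. norm (F x \<zeta>) \<partial>M) \<le> ?W x * ?C" for x
  proof (cases "x \<in> {0..\<rho>}")
    case True
    have "(\<integral>\<zeta>. norm (g x \<zeta>) \<partial>M) \<le> (\<integral>\<zeta>. B \<partial>M)"
      by (rule integral_mono_AE) (use gint[OF True] AEs bnd True in auto)
    then have "?W x * (\<integral>\<zeta>. norm (g x \<zeta>) \<partial>M) \<le> ?W x * ?C"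
      by (intro mult_left_mono) (auto simp: mult.commute)
    then show ?thesis using True by (simp add: F_def abs_mult)
  qed (simp add: F_def)
  have "integrable (lborel \<Otimes>\<^sub>M M) (case_prod F)"
  proof (rule P.Fubini_integrable[OF Fm])
    show "integrable lborel (\<lambda>x. \<integral>y. norm (case_prod F (x, y)) \<partial>M)"
    proof (rule Bochner_Integration.integrable_bound[OF integrable_mult_left[OF wi, of ?C]])
      show "(\<lambda>x. \<integral>y. norm (case_prod F (x, y)) \<partial>M) \<in> borel_measurable lborel"
        using Fm by measurable
      have "norm (\<integral>y. norm (F x y) \<partial>M) \<le> norm (?W x * ?C)" for x
        using nb[of x] by (simp add: integral_nonneg_AE)
      then show "AE x in lborel. norm (\<integral>y. norm (case_prod F (x, y)) \<partial>M) \<le> norm (?W x * ?C)"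
        by simp
    qed
    show "AE x in lborel. integrable M (\<lambda>y. case_prod F (x, y))"
      using gint by (auto simp: F_def indicator_def)
  qed
  then show ?thesis by (simp add: F_def)
qed

lemma frac_integral_fubini:
  fixes M :: "complex measure" and g :: "real \<Rightarrow> complex \<Rightarrow> 'b::euclidean_space"
  assumes M: "finite_circle_measure M"
    and meas: "(\<lambda>p. g (fst p) (snd p)) \<in> borel_measurable borel"
    and bnd: "\<And>x \<zeta>. x \<in> {0..\<rho>} \<Longrightarrow> \<zeta> \<in> sphere 0 1 \<Longrightarrow> norm (g x \<zeta>) \<le> B"
    and pos: "0 < \<gamma>" and r: "0 \<le> \<rho>"
  shows "(\<lambda>x. (\<rho> - x) powr (\<gamma> - 1) *\<^sub>R (\<integral>\<zeta>. g x \<zeta> \<partial>M)) integrable_on {0..\<rho>}"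
    and "integral {0..\<rho>} (\<lambda>x. (\<rho> - x) powr (\<gamma> - 1) *\<^sub>R (\<integral>\<zeta>. g x \<zeta> \<partial>M))
           = (\<integral>\<zeta>. (LINT x:{0..\<rho>}|lborel. (\<rho> - x) powr (\<gamma> - 1) *\<^sub>R g x \<zeta>) \<partial>M)"
    and "integrable M (\<lambda>\<zeta>. LINT x:{0..\<rho>}|lborel. (\<rho> - x) powr (\<gamma> - 1) *\<^sub>R g x \<zeta>)"
proof -
  interpret finite_measure M using M by (simp add: finite_circle_measure_def)
  interpret P: pair_sigma_finite lborel M
    by (intro pair_sigma_finite.intro) (simp_all add: lborel.sigma_finite_measure_axioms sigma_finite_measure_axioms)
  let ?w = "\<lambda>x. (\<rho> - x) powr (\<gamma> - 1)"
  define F where "F = (\<lambda>x \<zeta>. indicator {0..\<rho>} x *\<^sub>R (?w x *\<^sub>R g x \<zeta>))"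
  have Fint: "integrable (lborel \<Otimes>\<^sub>M M) (case_prod F)"
    unfolding F_def by (rule integrable_powr_diff_pair[OF M meas bnd pos r])
  have inner: "(\<integral>\<zeta>. F x \<zeta> \<partial>M) = indicator {0..\<rho>} x *\<^sub>R (?w x *\<^sub>R (\<integral>\<zeta>. g x \<zeta> \<partial>M))" for x
    by (simp add: F_def)
  have si: "set_integrable lborel {0..\<rho>} (\<lambda>x. ?w x *\<^sub>R (\<integral>\<zeta>. g x \<zeta> \<partial>M))"
    using P.integrable_fst[OF Fint] unfolding set_integrable_def inner .
  show "(\<lambda>x. ?w x *\<^sub>R (\<integral>\<zeta>. g x \<zeta> \<partial>M)) integrable_on {0..\<rho>}"
    by (rule set_borel_integral_eq_integral(1)[OF si])
  have "integral {0..\<rho>} (\<lambda>x. ?w x *\<^sub>R (\<integral>\<zeta>. g x \<zeta> \<partial>M)) = (\<integral>x. (\<integral>\<zeta>. F x \<zeta> \<partial>M) \<partial>lborel)"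
    using set_borel_integral_eq_integral(2)[OF si] unfolding inner set_lebesgue_integral_def by simp
  then show "integral {0..\<rho>} (\<lambda>x. ?w x *\<^sub>R (\<integral>\<zeta>. g x \<zeta> \<partial>M))
           = (\<integral>\<zeta>. (LINT x:{0..\<rho>}|lborel. ?w x *\<^sub>R g x \<zeta>) \<partial>M)"
    using P.Fubini_integral[OF Fint] by (simp add: set_lebesgue_integral_def F_def)
  show "integrable M (\<lambda>\<zeta>. (LINT x:{0..\<rho>}|lborel. ?w x *\<^sub>R g x \<zeta>))"
    using P.integrable_snd[OF Fint] unfolding set_lebesgue_integral_def F_def .
qed

lemma frac_integral_linear:
  fixes L :: "'a::euclidean_space \<Rightarrow> 'b::euclidean_space"
  assumes L: "bounded_linear L"
    and int: "\<gamma> \<noteq> 0 \<Longrightarrow>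
      (\<lambda>x. (cmod z - x) powr (\<gamma> - 1) *\<^sub>R u (of_real x * z / of_real (cmod z))) integrable_on {0..cmod z}"
  shows "frac_integral \<gamma> (\<lambda>w. L (u w)) z = L (frac_integral \<gamma> u z)"
proof (cases "\<gamma> = 0")
  case False
  have "integral {0..cmod z} (\<lambda>x. (cmod z - x) powr (\<gamma> - 1) *\<^sub>R L (u (of_real x * z / of_real (cmod z))))
      = L (integral {0..cmod z} (\<lambda>x. (cmod z - x) powr (\<gamma> - 1) *\<^sub>R u (of_real x * z / of_real (cmod z))))"
    using integral_linear[OF int[OF False] L] L by (simp add: o_def linear_simps)
  then show ?thesis using False L by (simp add: frac_integral_def linear_simps)
qed (simp add: frac_integral_def)

section \<open>The Herglotz kernel and fractional integration\<close>

definition herglotz_kernel :: "complex \<Rightarrow> complex \<Rightarrow> complex" where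
  "herglotz_kernel \<zeta> w = (\<zeta> + w) / (\<zeta> - w)"

lemma herglotz_eq_integral_kernel: "herglotz chi w = (\<integral>\<zeta>. herglotz_kernel \<zeta> w \<partial>chi)"
  by (simp add: herglotz_def herglotz_kernel_def)

lemma herglotz_kernel_measurable:
  "(\<lambda>\<zeta>. herglotz_kernel \<zeta> w) \<in> borel_measurable borel"
  "(\<lambda>p. herglotz_kernel (snd p) (of_real (fst p) * z / of_real r)) \<in> borel_measurable borel"
  unfolding herglotz_kernel_def
  by (intro borel_measurable_divide borel_measurable_add borel_measurable_diff
      borel_measurable_times borel_measurable_continuous_onI continuous_intros)+

lemma norm_herglotz_kernel_le:
  assumes z: "\<zeta> \<in> sphere 0 1" and w: "norm w \<le> r" "r < 1"
  shows "cmod (herglotz_kernel \<zeta> w) \<le> (1 + r) / (1 - r)"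
proof -
  have r0: "0 \<le> r" using w(1) norm_ge_zero[of w] by linarith
  have n1: "cmod (\<zeta> + w) \<le> 1 + r" using norm_triangle_ineq[of \<zeta> w] z w by auto
  have n2: "1 - r \<le> cmod (\<zeta> - w)" using norm_triangle_ineq2[of \<zeta> w] z w by auto
  have "cmod (herglotz_kernel \<zeta> w) = cmod (\<zeta> + w) / cmod (\<zeta> - w)"
    by (simp add: herglotz_kernel_def norm_divide)
  also have "\<dots> \<le> (1 + r) / (1 - r)"
    using n1 n2 w r0 by (intro frac_le) auto
  finally show ?thesis .
qed

lemma norm_herglotz_kernel_le_dist:
  assumes "\<zeta> \<in> sphere 0 1" "cmod w \<le> 1"
  shows "cmod (herglotz_kernel \<zeta> w) \<le> 2 / cmod (\<zeta> - w)"
proof -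
  have "cmod (\<zeta> + w) \<le> 2" using norm_triangle_ineq[of \<zeta> w] assms by auto
  then show ?thesis by (simp add: herglotz_kernel_def norm_divide divide_right_mono)
qed

lemma Im_herglotz_kernel:
  assumes "cmod \<zeta> = 1"
  shows "Im (herglotz_kernel \<zeta> w) = 2 * Im (w * cnj \<zeta>) / (cmod (\<zeta> - w))\<^sup>2"
proof -
  have "herglotz_kernel \<zeta> w = (\<zeta> + w) * cnj (\<zeta> - w) / of_real ((cmod (\<zeta> - w))\<^sup>2)"
    unfolding herglotz_kernel_def by (rule complex_div_cnj)
  moreover have "Im ((\<zeta> + w) * cnj (\<zeta> - w)) = 2 * Im (w * cnj \<zeta>)"
    using assms by (simp add: algebra_simps)
  ultimately show ?thesis by simp
qed

lemma integrable_herglotz_kernel: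
  assumes chi: "finite_circle_measure chi" and w: "cmod w < 1"
  shows "integrable chi (\<lambda>\<zeta>. herglotz_kernel \<zeta> w)"
proof -
  interpret finite_measure chi using chi by (simp add: finite_circle_measure_def)
  have s: "sets chi = sets borel" using chi by (simp add: finite_circle_measure_def circle_borel_measure_def)
  have "AE \<zeta> in chi. \<zeta> \<in> sphere 0 1"
    using chi by (intro AE_circle) (simp add: finite_circle_measure_def)
  then show ?thesis
    using norm_herglotz_kernel_le[OF _ order.refl w] herglotz_kernel_measurable(1) s
    by (intro integrable_const_bound[where B="(1 + cmod w) / (1 - cmod w)"])
      (auto simp: measurable_cong_sets[OF s refl])
qed

lemma norm_radial_point_le:
  assumes "x \<in> {0..cmod z}"
  shows "norm (of_real x * z / of_real (cmod z)) \<le> cmod z"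
  using assms by (cases "z = 0") (auto simp: norm_mult norm_divide)

lemma norm_herglotz_kernel_radial_le:
  assumes "cmod z < 1" "x \<in> {0..cmod z}" "\<zeta> \<in> sphere 0 1"
  shows "cmod (herglotz_kernel \<zeta> (of_real x * z / of_real (cmod z))) \<le> (1 + cmod z) / (1 - cmod z)"
  using norm_herglotz_kernel_le[OF assms(3) norm_radial_point_le[OF assms(2)] assms(1)] .

lemma set_integrable_radial_herglotz_kernel:
  assumes z: "cmod z < 1" and \<zeta>: "\<zeta> \<in> sphere 0 1" and g: "0 < \<gamma>"
  shows "set_integrable lborel {0..cmod z}
           (\<lambda>x. (cmod z - x) powr (\<gamma> - 1) *\<^sub>R herglotz_kernel \<zeta> (of_real x * z / of_real (cmod z)))"
  using norm_herglotz_kernel_radial_le[OF z _ \<zeta>]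
  by (intro set_integrable_powr_diff_scaleR[OF g]) (auto simp: herglotz_kernel_def)

lemma radial_herglotz_kernel_integrable_on:
  assumes "cmod z < 1" "\<zeta> \<in> sphere 0 1" "0 < \<gamma>"
  shows "(\<lambda>x. (cmod z - x) powr (\<gamma> - 1) *\<^sub>R herglotz_kernel \<zeta> (of_real x * z / of_real (cmod z)))
           integrable_on {0..cmod z}"
  using set_borel_integral_eq_integral(1)[OF set_integrable_radial_herglotz_kernel[OF assms]] .

lemma Im_frac_integral_herglotz_kernel:
  assumes "cmod z < 1" "\<zeta> \<in> sphere 0 1" "0 \<le> \<gamma>"
  shows "Im (frac_integral \<gamma> (herglotz_kernel \<zeta>) z) = frac_integral \<gamma> (\<lambda>w. Im (herglotz_kernel \<zeta> w)) z"
  using frac_integral_linear[OF bounded_linear_Im, of \<gamma> z "herglotz_kernel \<zeta>"]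
    radial_herglotz_kernel_integrable_on[OF assms(1,2)] assms(3) by simp

text \<open>
  This is \<open>frac_integral \<gamma> (herglotz_kernel \<zeta>) z\<close> with the Lebesgue integral in place of the
  Henstock--Kurzweil integral, so that it is measurable in \<open>\<zeta>\<close>; the two agree on the circle.
\<close>
definition frac_herglotz_kernel :: "real \<Rightarrow> complex \<Rightarrow> complex \<Rightarrow> complex" where
  "frac_herglotz_kernel \<gamma> z \<zeta> =
     (if \<gamma> = 0 then herglotz_kernel \<zeta> z
      else (1 / Gamma \<gamma>) *\<^sub>R (LINT x:{0..cmod z}|lborel.
        (cmod z - x) powr (\<gamma> - 1) *\<^sub>R herglotz_kernel \<zeta> (of_real x * z / of_real (cmod z))))"

lemma frac_herglotz_kernel_eq:
  assumes "cmod z < 1" "\<zeta> \<in> sphere 0 1" "0 \<le> \<gamma>"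
  shows "frac_herglotz_kernel \<gamma> z \<zeta> = frac_integral \<gamma> (herglotz_kernel \<zeta>) z"
proof (cases "\<gamma> = 0")
  case False
  then have "0 < \<gamma>" using assms(3) by simp
  then show ?thesis
    using False set_borel_integral_eq_integral(2)[OF set_integrable_radial_herglotz_kernel[OF assms(1,2)]]
    by (simp add: frac_herglotz_kernel_def frac_integral_def)
qed (simp add: frac_herglotz_kernel_def frac_integral_def)

lemma frac_integral_herglotz:
  assumes chi: "finite_circle_measure chi" and z: "cmod z < 1" and g: "0 \<le> \<gamma>"
  shows "frac_integral \<gamma> (herglotz chi) z = (\<integral>\<zeta>. frac_herglotz_kernel \<gamma> z \<zeta> \<partial>chi)"
    and "integrable chi (frac_herglotz_kernel \<gamma> z)"
proof -
  have "frac_integral \<gamma> (herglotz chi) z = (\<integral>\<zeta>. frac_herglotz_kernel \<gamma> z \<zeta> \<partial>chi)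
        \<and> integrable chi (frac_herglotz_kernel \<gamma> z)"
  proof (cases "\<gamma> = 0")
    case True
    then have "frac_herglotz_kernel \<gamma> z = (\<lambda>\<zeta>. herglotz_kernel \<zeta> z)"
      by (simp add: frac_herglotz_kernel_def fun_eq_iff)
    then show ?thesis using True integrable_herglotz_kernel[OF chi z]
      by (simp add: frac_integral_def herglotz_eq_integral_kernel)
  next
    case False
    then have "0 < \<gamma>" using g by simp
    note F = frac_integral_fubini[OF chi herglotz_kernel_measurable(2)[of z "cmod z"]
        norm_herglotz_kernel_radial_le[OF z] this norm_ge_zero[of z]]
    have "frac_herglotz_kernel \<gamma> z = (\<lambda>\<zeta>. (1 / Gamma \<gamma>) *\<^sub>R (LINT x:{0..cmod z}|lborel.
        (cmod z - x) powr (\<gamma> - 1) *\<^sub>R herglotz_kernel \<zeta> (of_real x * z / of_real (cmod z))))"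
      using False by (simp add: frac_herglotz_kernel_def fun_eq_iff)
    then show ?thesis
      using False F(2,3) by (simp add: frac_integral_def herglotz_eq_integral_kernel)
  qed
  then show "frac_integral \<gamma> (herglotz chi) z = (\<integral>\<zeta>. frac_herglotz_kernel \<gamma> z \<zeta> \<partial>chi)"
    and "integrable chi (frac_herglotz_kernel \<gamma> z)" by auto
qed

lemma frac_integral_Im_herglotz:
  assumes chi: "finite_circle_measure chi" and z: "cmod z < 1" and g: "0 \<le> \<gamma>"
  shows "frac_integral \<gamma> (\<lambda>w. Im (herglotz chi w)) z = Im (frac_integral \<gamma> (herglotz chi) z)"
proof (rule frac_integral_linear[OF bounded_linear_Im])
  assume "\<gamma> \<noteq> 0"
  then have "0 < \<gamma>" using g by simp
  from frac_integral_fubini(1)[OF chi herglotz_kernel_measurable(2)[of z "cmod z"]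
      norm_herglotz_kernel_radial_le[OF z] this norm_ge_zero[of z]]
  show "(\<lambda>x. (cmod z - x) powr (\<gamma> - 1) *\<^sub>R herglotz chi (of_real x * z / of_real (cmod z)))
          integrable_on {0..cmod z}"
    by (simp add: herglotz_eq_integral_kernel)
qed

lemma frac_integral_herglotz_bounded_imp_Im_bounded:
  assumes psi: "finite_circle_measure \<psi>" and g: "0 \<le> \<gamma>"
    and H: "\<forall>\<sigma>>1. \<exists>K>0. \<forall>chi. circle_borel_measure chi \<and> measure_prec chi \<psi> \<longrightarrow>
        (\<forall>z \<in> stolz_star \<sigma> \<zeta>0. cmod (frac_integral \<gamma> (herglotz chi) z) < K)"
  shows "\<forall>\<sigma>>1. \<exists>K>0. \<forall>chi. circle_borel_measure chi \<and> measure_prec chi \<psi> \<longrightarrow>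
        (\<forall>z \<in> stolz_star \<sigma> \<zeta>0. \<bar>frac_integral \<gamma> (\<lambda>w. Im (herglotz chi w)) z\<bar> < K)"
proof (intro allI impI)
  fix \<sigma> :: real assume "1 < \<sigma>"
  then obtain K where "K > 0" and K: "\<forall>chi. circle_borel_measure chi \<and> measure_prec chi \<psi> \<longrightarrow>
        (\<forall>z \<in> stolz_star \<sigma> \<zeta>0. cmod (frac_integral \<gamma> (herglotz chi) z) < K)"
    using H by blast
  have "\<bar>frac_integral \<gamma> (\<lambda>w. Im (herglotz chi w)) z\<bar> < K"
    if chi: "circle_borel_measure chi \<and> measure_prec chi \<psi>" and z: "z \<in> stolz_star \<sigma> \<zeta>0" for chi z
  proof -
    have "finite_circle_measure chi" using finite_circle_measure_if_prec[of chi \<psi>] chi psi by simp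
    moreover have "cmod z < 1" using z by (simp add: stolz_star_def stolz_def)
    ultimately have "\<bar>frac_integral \<gamma> (\<lambda>w. Im (herglotz chi w)) z\<bar> \<le> cmod (frac_integral \<gamma> (herglotz chi) z)"
      using frac_integral_Im_herglotz[OF _ _ g] abs_Im_le_cmod by simp
    also have "\<dots> < K" using K chi z by simp
    finally show ?thesis .
  qed
  then show "\<exists>K>0. \<forall>chi. circle_borel_measure chi \<and> measure_prec chi \<psi> \<longrightarrow>
        (\<forall>z \<in> stolz_star \<sigma> \<zeta>0. \<bar>frac_integral \<gamma> (\<lambda>w. Im (herglotz chi w)) z\<bar> < K)"
    using \<open>K > 0\<close> by auto
qed

section \<open>The upper bound on a Stolz angle\<close>

lemma stolzD:
  assumes "z \<in> stolz \<sigma> \<zeta>0" "cmod \<zeta>0 = 1"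
  shows "cmod (\<zeta>0 - z) \<le> \<sigma> * (1 - cmod z)" "cmod z < 1"
proof -
  have "(\<zeta>0 - z) * cnj \<zeta>0 = 1 - z * cnj \<zeta>0"
    using assms(2) by (simp add: algebra_simps complex_norm_square[symmetric] mult.commute)
  then have "cmod (\<zeta>0 - z) = cmod (1 - z * cnj \<zeta>0)"
    using assms(2) by (metis complex_mod_cnj mult_cancel_left1 norm_mult)
  then show "cmod (\<zeta>0 - z) \<le> \<sigma> * (1 - cmod z)" using assms(1) by (simp add: stolz_def)
  show "cmod z < 1" using assms(1) by (simp add: stolz_def)
qed

lemma stolz_radial_dist:
  assumes zs: "z \<in> stolz \<sigma> \<zeta>0" and z0: "cmod \<zeta>0 = 1" and s: "1 \<le> \<sigma>"
    and \<zeta>: "\<zeta> \<in> sphere 0 1" and x: "x \<in> {0..cmod z}"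
  defines "w \<equiv> of_real x * z / of_real (cmod z)"
  shows "cmod z - x \<le> cmod (\<zeta> - w)" "cmod (\<zeta>0 - \<zeta>) \<le> (1 + \<sigma>) * cmod (\<zeta> - w)"
proof -
  note sd = stolzD[OF zs z0]
  have nw: "cmod w = x" using x by (cases "z = 0") (auto simp: w_def norm_mult norm_divide)
  have a: "1 - x \<le> cmod (\<zeta> - w)" using norm_triangle_ineq2[of \<zeta> w] \<zeta> nw by auto
  then show "cmod z - x \<le> cmod (\<zeta> - w)" using sd(2) by linarith
  have zw: "cmod (z - w) = cmod z - x"
  proof (cases "z = 0")
    case False
    have "z - w = of_real (1 - x / cmod z) * z" using False by (simp add: w_def field_simps)
    then have "cmod (z - w) = \<bar>1 - x / cmod z\<bar> * cmod z" by (simp only: norm_mult norm_of_real)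
    also have "\<dots> = cmod z - x" using x False by (simp add: abs_of_nonneg field_simps)
    finally show ?thesis .
  qed (use x in \<open>auto simp: w_def\<close>)
  have "cmod (\<zeta>0 - w) \<le> cmod (\<zeta>0 - z) + cmod (z - w)"
    using norm_triangle_ineq[of "\<zeta>0 - z" "z - w"] by simp
  also have "\<dots> \<le> \<sigma> * (1 - cmod z) + (cmod z - x)" using sd(1) zw by simp
  also have "\<dots> \<le> \<sigma> * (1 - x)"
    using mult_right_mono[of 1 \<sigma> "cmod z - x"] s x by (simp add: algebra_simps)
  also have "\<dots> \<le> \<sigma> * cmod (\<zeta> - w)" using a s by simp
  finally have "cmod (\<zeta>0 - w) \<le> \<sigma> * cmod (\<zeta> - w)" .
  moreover have "cmod (\<zeta>0 - \<zeta>) \<le> cmod (\<zeta>0 - w) + cmod (\<zeta> - w)"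
    using norm_triangle_ineq[of "\<zeta>0 - w" "w - \<zeta>"] by (simp add: norm_minus_commute)
  ultimately show "cmod (\<zeta>0 - \<zeta>) \<le> (1 + \<sigma>) * cmod (\<zeta> - w)" by (simp add: algebra_simps)
qed

lemma norm_herglotz_kernel_radial_le_stolz:
  assumes zs: "z \<in> stolz \<sigma> \<zeta>0" and z0: "cmod \<zeta>0 = 1" and s: "1 \<le> \<sigma>"
    and \<zeta>: "\<zeta> \<in> sphere 0 1" and d: "0 < cmod (\<zeta>0 - \<zeta>)" and x: "x \<in> {0..cmod z}"
  shows "cmod (herglotz_kernel \<zeta> (of_real x * z / of_real (cmod z)))
           \<le> 2 * (1 + \<sigma>) / max (cmod (\<zeta>0 - \<zeta>)) (cmod z - x)"
proof -
  let ?w = "of_real x * z / of_real (cmod z)"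
  let ?m = "max (cmod (\<zeta>0 - \<zeta>)) (cmod z - x)"
  note dist = stolz_radial_dist[OF zs z0 s \<zeta> x]
  have m: "?m \<le> (1 + \<sigma>) * cmod (\<zeta> - ?w)"
    using dist mult_right_mono[of 1 "1 + \<sigma>" "cmod (\<zeta> - ?w)"] s by auto
  have m0: "0 < ?m" using d by (simp add: less_max_iff_disj)
  have "cmod ?w \<le> 1" using norm_radial_point_le[OF x] stolzD(2)[OF zs z0] by simp
  then have "cmod (herglotz_kernel \<zeta> ?w) \<le> 2 / cmod (\<zeta> - ?w)"
    by (rule norm_herglotz_kernel_le_dist[OF \<zeta>])
  also have "\<dots> = 2 * (1 + \<sigma>) / ((1 + \<sigma>) * cmod (\<zeta> - ?w))"
    by (rule nonzero_mult_divide_mult_cancel_right2[symmetric]) (use s in simp)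
  also have "\<dots> \<le> 2 * (1 + \<sigma>) / ?m"
    using m m0 s by (intro divide_left_mono mult_pos_pos) auto
  finally show ?thesis .
qed

definition kernel_upper_const :: "real \<Rightarrow> real \<Rightarrow> real" where
  "kernel_upper_const \<gamma> \<sigma> =
     (if \<gamma> = 0 then 2 * (1 + \<sigma>) else 2 * (1 + \<sigma>) * (1 / \<gamma> + 1 / (1 - \<gamma>)) / Gamma \<gamma>)"

lemma kernel_upper_const_pos: "0 \<le> \<gamma> \<Longrightarrow> \<gamma> < 1 \<Longrightarrow> 1 \<le> \<sigma> \<Longrightarrow> 0 < kernel_upper_const \<gamma> \<sigma>"
  unfolding kernel_upper_const_def by (auto intro!: divide_pos_pos Gamma_real_pos mult_pos_pos add_pos_pos)

lemma norm_frac_integral_herglotz_kernel_le: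
  assumes zs: "z \<in> stolz \<sigma> \<zeta>0" and z0: "cmod \<zeta>0 = 1" and s: "1 \<le> \<sigma>"
    and \<zeta>: "\<zeta> \<in> sphere 0 1" and d: "0 < cmod (\<zeta>0 - \<zeta>)" and g: "0 \<le> \<gamma>" "\<gamma> < 1"
  shows "cmod (frac_integral \<gamma> (herglotz_kernel \<zeta>) z)
           \<le> kernel_upper_const \<gamma> \<sigma> * cmod (\<zeta>0 - \<zeta>) powr (\<gamma> - 1)"
proof -
  define d where "d = cmod (\<zeta>0 - \<zeta>)"
  define \<rho> where "\<rho> = cmod z"
  note pw = norm_herglotz_kernel_radial_le_stolz[OF zs z0 s \<zeta> d, folded d_def \<rho>_def]
  have r1: "\<rho> < 1" using stolzD[OF zs z0] by (simp add: \<rho>_def)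
  have dp: "0 < d" using d by (simp add: d_def)
  show ?thesis
  proof (cases "\<gamma> = 0")
    case True
    have "cmod (herglotz_kernel \<zeta> z) \<le> 2 * (1 + \<sigma>) / d"
      using pw[of \<rho>] dp by (cases "z = 0") (auto simp: \<rho>_def)
    moreover have "d powr (\<gamma> - 1) = 1 / d" using True dp by (simp add: powr_minus_divide)
    ultimately show ?thesis using True by (simp add: frac_integral_def kernel_upper_const_def d_def)
  next
    case False
    then have gp: "0 < \<gamma>" using g by simp
    let ?f = "\<lambda>x. (\<rho> - x) powr (\<gamma> - 1) *\<^sub>R herglotz_kernel \<zeta> (of_real x * z / of_real \<rho>)"
    let ?M = "\<lambda>x. (\<rho> - x) powr (\<gamma> - 1) / max d (\<rho> - x)"
    obtain I where I: "(?M has_integral I) {0..\<rho>}" "I \<le> d powr (\<gamma> - 1) * (1 / \<gamma> + 1 / (1 - \<gamma>))"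
      using powr_diff_over_max_integral_le[OF gp g(2) dp, of \<rho>] by (auto simp: \<rho>_def)
    have gi: "((\<lambda>x. 2 * (1 + \<sigma>) * ?M x) has_integral (2 * (1 + \<sigma>) * I)) {0..\<rho>}"
      using has_integral_mult_right[OF I(1), of "2 * (1 + \<sigma>)"] by simp
    have "norm (integral {0..\<rho>} ?f) \<le> integral {0..\<rho>} (\<lambda>x. 2 * (1 + \<sigma>) * ?M x)"
    proof (rule integral_norm_bound_integral)
      show "?f integrable_on {0..\<rho>}"
        using radial_herglotz_kernel_integrable_on[OF r1[unfolded \<rho>_def] \<zeta> gp] by (simp add: \<rho>_def)
      show "(\<lambda>x. 2 * (1 + \<sigma>) * ?M x) integrable_on {0..\<rho>}" using gi by blast
      fix x assume x: "x \<in> {0..\<rho>}"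
      have "norm (?f x) = (\<rho> - x) powr (\<gamma> - 1) * cmod (herglotz_kernel \<zeta> (of_real x * z / of_real \<rho>))"
        by simp
      also have "\<dots> \<le> (\<rho> - x) powr (\<gamma> - 1) * (2 * (1 + \<sigma>) / max d (\<rho> - x))"
        by (rule mult_left_mono[OF pw[OF x]]) simp
      also have "\<dots> = 2 * (1 + \<sigma>) * ?M x" by simp
      finally show "norm (?f x) \<le> 2 * (1 + \<sigma>) * ?M x" .
    qed
    also have "\<dots> = 2 * (1 + \<sigma>) * I" using gi by (rule integral_unique)
    also have "\<dots> \<le> 2 * (1 + \<sigma>) * (d powr (\<gamma> - 1) * (1 / \<gamma> + 1 / (1 - \<gamma>)))"
      using I(2) s by (intro mult_left_mono) auto
    finally have "norm (integral {0..\<rho>} ?f) / Gamma \<gamma>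
        \<le> 2 * (1 + \<sigma>) * (d powr (\<gamma> - 1) * (1 / \<gamma> + 1 / (1 - \<gamma>))) / Gamma \<gamma>"
      using Gamma_real_pos[OF gp] by (intro divide_right_mono) auto
    then show ?thesis
      using False Gamma_real_pos[OF gp] by (simp add: frac_integral_def kernel_upper_const_def \<rho>_def d_def mult_ac)
  qed
qed

lemma norm_frac_integral_herglotz_le:
  assumes psi: "finite_circle_measure \<psi>" and chi: "circle_borel_measure chi" "measure_prec chi \<psi>"
    and zs: "z \<in> stolz \<sigma> \<zeta>0" and z0: "cmod \<zeta>0 = 1" and s: "1 \<le> \<sigma>" and g: "0 \<le> \<gamma>" "\<gamma> < 1"
  shows "ennreal (cmod (frac_integral \<gamma> (herglotz chi) z))
           \<le> ennreal (kernel_upper_const \<gamma> \<sigma>) * (\<integral>\<^sup>+ \<zeta>. inverse (ennreal (cmod (\<zeta>0 - \<zeta>) powr (1 - \<gamma>))) \<partial>\<psi>)"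
proof -
  let ?h = "\<lambda>\<zeta>. inverse (ennreal (cmod (\<zeta>0 - \<zeta>) powr (1 - \<gamma>)))"
  let ?C = "kernel_upper_const \<gamma> \<sigma>"
  have C: "0 < ?C" using kernel_upper_const_pos[OF g s] .
  have fin: "finite_circle_measure chi" by (rule finite_circle_measure_if_prec[OF chi(1) psi chi(2)])
  have sM: "sets chi = sets borel" and sP: "sets \<psi> = sets borel"
    using chi psi by (auto simp: circle_borel_measure_def finite_circle_measure_def)
  note R = frac_integral_herglotz[OF fin stolzD(2)[OF zs z0] g(1)]
  have pt: "ennreal (norm (frac_herglotz_kernel \<gamma> z \<zeta>)) \<le> ennreal ?C * ?h \<zeta>"
    if \<zeta>: "\<zeta> \<in> sphere 0 1" for \<zeta>
  proof (cases "\<zeta> = \<zeta>0")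
    case True
    then show ?thesis using C by (simp add: ennreal_mult_top)
  next
    case False
    then have d: "0 < cmod (\<zeta>0 - \<zeta>)" by simp
    have "norm (frac_herglotz_kernel \<gamma> z \<zeta>) \<le> ?C * inverse (cmod (\<zeta>0 - \<zeta>) powr (1 - \<gamma>))"
      using norm_frac_integral_herglotz_kernel_le[OF zs z0 s \<zeta> d g] d
        frac_herglotz_kernel_eq[OF stolzD(2)[OF zs z0] \<zeta> g(1)]
      by (simp add: powr_minus[symmetric])
    then show ?thesis using C d by (simp add: ennreal_leI ennreal_mult inverse_ennreal flip: ennreal_mult)
  qed
  have "ennreal (cmod (frac_integral \<gamma> (herglotz chi) z)) \<le> (\<integral>\<^sup>+ \<zeta>. norm (frac_herglotz_kernel \<gamma> z \<zeta>) \<partial>chi)"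
    unfolding R(1) by (rule integral_norm_bound_ennreal[OF R(2)])
  also have "\<dots> \<le> (\<integral>\<^sup>+ \<zeta>. ennreal ?C * ?h \<zeta> \<partial>chi)"
    using AE_circle[OF chi(1)] pt by (intro nn_integral_mono_AE) auto
  also have "\<dots> = ennreal ?C * (\<integral>\<^sup>+ \<zeta>. ?h \<zeta> \<partial>chi)"
    by (rule nn_integral_cmult) (simp add: measurable_cong_sets[OF sM refl])
  also have "(\<integral>\<^sup>+ \<zeta>. ?h \<zeta> \<partial>chi) \<le> (\<integral>\<^sup>+ \<zeta>. ?h \<zeta> \<partial>\<psi>)"
    using measure_prec_imp_le[OF chi(1) sP chi(2)] sM sP by (intro nn_integral_mono_measure) auto
  finally show ?thesis by (simp add: mult_left_mono)
qed

lemma integral_finite_imp_frac_integral_herglotz_bounded: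
  assumes psi: "finite_circle_measure \<psi>" and g: "0 \<le> \<gamma>" "\<gamma> < 1" and z0: "cmod \<zeta>0 = 1"
    and fin: "(\<integral>\<^sup>+ \<zeta>. inverse (ennreal (cmod (\<zeta>0 - \<zeta>) powr (1 - \<gamma>))) \<partial>\<psi>) < \<infinity>"
  shows "\<forall>\<sigma>>1. \<exists>K>0. \<forall>chi. circle_borel_measure chi \<and> measure_prec chi \<psi> \<longrightarrow>
           (\<forall>z \<in> stolz_star \<sigma> \<zeta>0. cmod (frac_integral \<gamma> (herglotz chi) z) < K)"
proof (intro allI impI)
  fix \<sigma> :: real assume s: "1 < \<sigma>"
  let ?I = "\<integral>\<^sup>+ \<zeta>. inverse (ennreal (cmod (\<zeta>0 - \<zeta>) powr (1 - \<gamma>))) \<partial>\<psi>"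
  let ?C = "kernel_upper_const \<gamma> \<sigma>"
  have C: "0 < ?C" using kernel_upper_const_pos[OF g] s by simp
  have "cmod (frac_integral \<gamma> (herglotz chi) z) < ?C * enn2real ?I + 1"
    if "circle_borel_measure chi" "measure_prec chi \<psi>" "z \<in> stolz_star \<sigma> \<zeta>0" for chi z
  proof -
    have "ennreal (cmod (frac_integral \<gamma> (herglotz chi) z)) \<le> ennreal ?C * ?I"
      using norm_frac_integral_herglotz_le[OF psi that(1,2) _ z0 _ g] that(3) s
      by (simp add: stolz_star_def)
    also have "\<dots> = ennreal (?C * enn2real ?I)"
      using fin C by (simp add: ennreal_mult ennreal_enn2real)
    finally show ?thesis using C by (simp add: ennreal_le_iff)
  qed
  moreover have "0 < ?C * enn2real ?I + 1" using C by (simp add: add_nonneg_pos)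
  ultimately show "\<exists>K>0. \<forall>chi. circle_borel_measure chi \<and> measure_prec chi \<psi> \<longrightarrow>
           (\<forall>z \<in> stolz_star \<sigma> \<zeta>0. cmod (frac_integral \<gamma> (herglotz chi) z) < K)"
    by blast
qed

section \<open>The lower bound near the boundary\<close>

text \<open>
  For \<open>\<epsilon> = \<plusminus>1\<close>, \<open>half_arc \<zeta>0 \<epsilon>\<close> is the short arc of the circle on one side of \<open>\<zeta>0\<close>
  and \<open>arc_point \<zeta>0 \<epsilon> t\<close> is the point of the circle at distance about \<open>t\<close> on the other side.
\<close>
definition arc_point :: "complex \<Rightarrow> real \<Rightarrow> real \<Rightarrow> complex" where
  "arc_point \<zeta>0 \<epsilon> t = \<zeta>0 * Complex (sqrt (1 - t\<^sup>2)) (\<epsilon> * t)"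

definition half_arc :: "complex \<Rightarrow> real \<Rightarrow> complex set" where
  "half_arc \<zeta>0 \<epsilon> = {\<zeta>. cmod \<zeta> = 1 \<and> cmod (\<zeta>0 - \<zeta>) \<le> 1/8 \<and> \<epsilon> * Im (\<zeta> * cnj \<zeta>0) \<le> 0}"

lemma half_arc_borel [measurable]: "half_arc \<zeta>0 \<epsilon> \<in> sets borel"
  unfolding half_arc_def by measurable

lemma arc_rotation_bounds:
  fixes t \<epsilon> :: real
  assumes t: "0 < t" "t \<le> 1/8" and e: "\<bar>\<epsilon>\<bar> = 1"
  defines "c \<equiv> Complex (sqrt (1 - t\<^sup>2)) (\<epsilon> * t)"
  shows "cmod c = 1" "cmod (1 - c) \<le> 3/2 * t" "1/2 \<le> sqrt (1 - t\<^sup>2)"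
proof -
  have t2: "t\<^sup>2 \<le> 1/64" using power_mono[OF t(2), of 2] t by (simp add: power2_eq_square)
  have e2: "\<epsilon>\<^sup>2 = 1" using e by (metis power2_abs power_one)
  show "cmod c = 1" using t2 e2 by (simp add: c_def cmod_def power_mult_distrib)
  have a: "1 - t\<^sup>2 \<le> sqrt (1 - t\<^sup>2)"
  proof -
    have nn: "0 \<le> 1 - t\<^sup>2" using t2 by simp
    have "1 - t\<^sup>2 = sqrt (1 - t\<^sup>2) * sqrt (1 - t\<^sup>2)" using nn by simp
    also have "\<dots> \<le> sqrt (1 - t\<^sup>2) * 1"
      using nn by (intro mult_left_mono) (auto simp: real_sqrt_le_1_iff)
    finally show ?thesis by simp
  qed
  then show "1/2 \<le> sqrt (1 - t\<^sup>2)" using t2 by linarith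
  have "(cmod (1 - c))\<^sup>2 = (1 - sqrt (1 - t\<^sup>2))\<^sup>2 + t\<^sup>2"
    using e2 by (simp add: c_def cmod_def power_mult_distrib)
  also have "\<dots> \<le> (t\<^sup>2)\<^sup>2 + t\<^sup>2"
    using a t2 by (intro add_right_mono power_mono) (auto simp: real_sqrt_le_1_iff)
  also have "\<dots> \<le> (3/2 * t)\<^sup>2"
  proof -
    have "(t\<^sup>2)\<^sup>2 \<le> t\<^sup>2 * (1/64)" using mult_left_mono[OF t2, of "t\<^sup>2"] by (simp add: power2_eq_square)
    moreover have "(3/2 * t)\<^sup>2 = 9/4 * t\<^sup>2" by (simp add: power_mult_distrib power2_eq_square)
    moreover have "0 \<le> t\<^sup>2" by simp
    ultimately show ?thesis by linarith
  qed
  finally show "cmod (1 - c) \<le> 3/2 * t"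
    by (rule power2_le_imp_le) (use t in simp)
qed

lemma half_arc_rotation:
  assumes z0: "cmod \<zeta>0 = 1" and A: "\<zeta> \<in> half_arc \<zeta>0 \<epsilon>"
  defines "v \<equiv> \<zeta> * cnj \<zeta>0"
  shows "cmod v = 1" "127/128 \<le> Re v" "\<bar>Im v\<bar> \<le> 1/8"
proof -
  have ze: "cmod \<zeta> = 1" and dA: "cmod (\<zeta>0 - \<zeta>) \<le> 1/8" using A by (auto simp: half_arc_def)
  show v1: "cmod v = 1" using ze z0 by (simp add: v_def norm_mult)
  have "(\<zeta>0 - \<zeta>) * cnj \<zeta>0 = 1 - v"
    using z0 by (simp add: v_def algebra_simps complex_norm_square[symmetric])
  then have dv: "cmod (1 - v) = cmod (\<zeta>0 - \<zeta>)" using z0 by (metis norm_mult complex_mod_cnj mult_1_right)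
  have "(cmod (1 - v))\<^sup>2 = 2 - 2 * Re v"
    using v1 cmod_power2[of v] by (simp only: cmod_power2) (simp add: power2_eq_square algebra_simps)
  moreover have "(cmod (1 - v))\<^sup>2 \<le> (1/8)\<^sup>2" using dA dv by (intro power_mono) auto
  ultimately show "127/128 \<le> Re v" by (simp add: power2_eq_square)
  show "\<bar>Im v\<bar> \<le> 1/8" using abs_Im_le_cmod[of "1 - v"] dA dv by simp
qed

lemma norm_one_minus_unit_le_Im:
  assumes y: "cmod y = 1" and re: "0 \<le> Re y"
  shows "cmod (1 - y) / 2 \<le> \<bar>Im y\<bar>"
proof -
  have yy: "(Re y)\<^sup>2 + (Im y)\<^sup>2 = 1" using y cmod_power2[of y] by simp
  have "(cmod (1 - y))\<^sup>2 = 2 - 2 * Re y"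
    using yy by (simp only: cmod_power2) (simp add: power2_eq_square algebra_simps)
  moreover have "(Re y)\<^sup>2 \<le> Re y"
    using re abs_Re_le_cmod[of y] y by (simp add: power2_eq_square mult_left_le_one_le)
  ultimately have "(cmod (1 - y))\<^sup>2 \<le> 4 * (Im y)\<^sup>2"
    using yy zero_le_power2[of "Im y"] by linarith
  then have "(cmod (1 - y) / 2)\<^sup>2 \<le> \<bar>Im y\<bar>\<^sup>2" by (simp add: power_divide)
  then show ?thesis by (rule power2_le_imp_le) simp
qed

lemma half_arc_geometry:
  fixes t \<epsilon> :: real
  assumes t: "0 < t" "t \<le> 1/8" and e: "\<bar>\<epsilon>\<bar> = 1" and z0: "cmod \<zeta>0 = 1"
    and A: "\<zeta> \<in> half_arc \<zeta>0 \<epsilon>"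
  defines "u \<equiv> arc_point \<zeta>0 \<epsilon> t"
  defines "y \<equiv> u * cnj \<zeta>"
  shows "cmod u = 1" "t / 2 \<le> \<epsilon> * Im y" "cmod (\<zeta> - u) / 2 \<le> \<epsilon> * Im y"
    "t / 2 \<le> cmod (\<zeta> - u)" "cmod (\<zeta> - u) \<le> cmod (\<zeta>0 - \<zeta>) + 3/2 * t"
proof -
  define a where "a = sqrt (1 - t\<^sup>2)"
  define c where "c = Complex a (\<epsilon> * t)"
  define v where "v = \<zeta> * cnj \<zeta>0"
  note U = arc_rotation_bounds[OF t e, folded a_def, folded c_def]
  note V = half_arc_rotation[OF z0 A, folded v_def]
  have ze: "cmod \<zeta> = 1" and sA: "\<epsilon> * Im v \<le> 0" using A by (auto simp: half_arc_def v_def)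
  have e2: "\<epsilon> * \<epsilon> = 1" using abs_mult_self_eq[of \<epsilon>] e by simp
  show u1: "cmod u = 1" using z0 U(1) by (simp add: u_def arc_point_def a_def c_def norm_mult)
  have yv: "y = c * cnj v" by (simp add: y_def u_def arc_point_def c_def a_def v_def algebra_simps)
  have y1: "cmod y = 1" using U(1) V(1) by (simp add: yv norm_mult)
  have "\<epsilon> * Im y = (\<epsilon> * \<epsilon>) * (t * Re v) - a * (\<epsilon> * Im v)"
    by (simp add: yv c_def algebra_simps)
  then have Im_y: "\<epsilon> * Im y = t * Re v - a * (\<epsilon> * Im v)" using e2 by simp
  have "0 \<le> - (a * (\<epsilon> * Im v))" using sA U(3) by (simp add: mult_nonneg_nonpos)
  moreover have "t / 2 \<le> t * Re v" using V(2) t by (simp add: mult_left_mono[of "1/2" "Re v" t, simplified])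
  ultimately show ey: "t / 2 \<le> \<epsilon> * Im y" using Im_y by linarith
  have "0 \<le> Re y"
  proof -
    have "\<bar>\<epsilon> * t * Im v\<bar> \<le> t * (1/8)" using e t V(3) by (simp add: abs_mult mult_left_mono)
    moreover have "1/2 * (127/128) \<le> a * Re v" using U(3) V(2) by (intro mult_mono) auto
    moreover have "Re y = a * Re v + \<epsilon> * t * Im v" by (simp add: yv c_def)
    ultimately show ?thesis using t by linarith
  qed
  then have "cmod (1 - y) / 2 \<le> \<bar>Im y\<bar>" by (rule norm_one_minus_unit_le_Im[OF y1])
  moreover have abs_Im: "\<bar>Im y\<bar> = \<epsilon> * Im y"
  proof -
    have "\<bar>\<epsilon> * Im y\<bar> = \<epsilon> * Im y" using ey t by simp
    then show ?thesis using e by (simp add: abs_mult)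
  qed
  ultimately have by2: "cmod (1 - y) / 2 \<le> \<epsilon> * Im y" by simp
  have "(\<zeta> - u) * cnj \<zeta> = 1 - y"
    using ze by (simp add: y_def algebra_simps complex_norm_square[symmetric])
  then have bz: "cmod (\<zeta> - u) = cmod (1 - y)" using ze by (metis norm_mult complex_mod_cnj mult_1_right)
  then show "cmod (\<zeta> - u) / 2 \<le> \<epsilon> * Im y" using by2 by simp
  have "\<epsilon> * Im y \<le> cmod (1 - y)"
    using abs_Im_le_cmod[of "1 - y"] abs_Im by simp
  then show "t / 2 \<le> cmod (\<zeta> - u)" using ey bz by simp
  have "\<zeta>0 - u = \<zeta>0 * (1 - c)" by (simp add: u_def arc_point_def c_def a_def algebra_simps)
  then have "cmod (\<zeta>0 - u) = cmod (1 - c)" using z0 by (simp add: norm_mult)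
  then have "cmod (\<zeta>0 - u) \<le> 3/2 * t" using U(2) by simp
  moreover have "cmod (\<zeta> - u) \<le> cmod (\<zeta> - \<zeta>0) + cmod (\<zeta>0 - u)"
    using norm_triangle_ineq[of "\<zeta> - \<zeta>0" "\<zeta>0 - u"] by simp
  ultimately show "cmod (\<zeta> - u) \<le> cmod (\<zeta>0 - \<zeta>) + 3/2 * t" by (simp add: norm_minus_commute)
qed

lemma Im_herglotz_kernel_arc_lower:
  fixes t \<epsilon> x :: real
  assumes t: "0 < t" "t \<le> 1/8" and e: "\<bar>\<epsilon>\<bar> = 1" and z0: "cmod \<zeta>0 = 1"
    and A: "\<zeta> \<in> half_arc \<zeta>0 \<epsilon>"
  defines "u \<equiv> arc_point \<zeta>0 \<epsilon> t"
  shows "x \<in> {0..1 - t/2} \<Longrightarrow> 0 \<le> \<epsilon> * Im (herglotz_kernel \<zeta> (of_real x * u))"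
    and "x \<in> {1 - t/2 - cmod (\<zeta> - u)..1 - t/2} \<Longrightarrow>
           1 / (18 * cmod (\<zeta> - u)) \<le> \<epsilon> * Im (herglotz_kernel \<zeta> (of_real x * u))"
proof -
  define y where "y = u * cnj \<zeta>"
  define b where "b = cmod (\<zeta> - u)"
  note G = half_arc_geometry[OF t e z0 A, folded u_def, folded y_def b_def]
  have ze: "cmod \<zeta> = 1" and dA: "cmod (\<zeta>0 - \<zeta>) \<le> 1/8" using A by (auto simp: half_arc_def)
  have ey0: "0 \<le> \<epsilon> * Im y" using G(2) t by linarith
  have EK: "\<epsilon> * Im (herglotz_kernel \<zeta> (of_real x * u)) = 2 * x * (\<epsilon> * Im y) / (cmod (\<zeta> - of_real x * u))\<^sup>2"
    using Im_herglotz_kernel[OF ze, of "of_real x * u"] by (simp add: y_def mult.assoc algebra_simps)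
  show "x \<in> {0..1 - t/2} \<Longrightarrow> 0 \<le> \<epsilon> * Im (herglotz_kernel \<zeta> (of_real x * u))"
    unfolding EK using ey0 by auto
  assume x: "x \<in> {1 - t/2 - cmod (\<zeta> - u)..1 - t/2}"
  have bp: "0 < b" using G(4) t by linarith
  have x12: "1/2 \<le> x" "x < 1" using x G(5) dA t by (auto simp: b_def)
  have nw: "cmod (of_real x * u) = x" using G(1) x12 by (simp add: norm_mult)
  have "1 - x \<le> cmod (\<zeta> - of_real x * u)"
    using norm_triangle_ineq2[of \<zeta> "of_real x * u"] ze nw by simp
  then have pos: "0 < cmod (\<zeta> - of_real x * u)" using x12 by linarith
  have "u - of_real x * u = of_real (1 - x) * u" by (simp add: algebra_simps)
  then have "cmod (u - of_real x * u) = \<bar>1 - x\<bar> * cmod u" by (simp only: norm_mult norm_of_real)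
  then have "cmod (u - of_real x * u) = 1 - x" using G(1) x12 by simp
  then have "cmod (\<zeta> - of_real x * u) \<le> b + (1 - x)"
    using norm_triangle_ineq[of "\<zeta> - u" "u - of_real x * u"] by (simp add: b_def)
  also have "\<dots> \<le> 3 * b" using x G(4) by (simp add: b_def)
  finally have "(cmod (\<zeta> - of_real x * u))\<^sup>2 \<le> (3 * b)\<^sup>2" using pos by (intro power_mono) auto
  moreover have "b / 2 \<le> 2 * x * (\<epsilon> * Im y)"
    using G(3) x12 ey0 mult_right_mono[of 1 "2 * x" "\<epsilon> * Im y"] by simp
  ultimately have "(b / 2) / (3 * b)\<^sup>2 \<le> 2 * x * (\<epsilon> * Im y) / (cmod (\<zeta> - of_real x * u))\<^sup>2"
    using x12 ey0 pos by (intro frac_le) auto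
  moreover have "(b / 2) / (3 * b)\<^sup>2 = 1 / (18 * b)" using bp by (simp add: power2_eq_square field_simps)
  ultimately show "1 / (18 * cmod (\<zeta> - u)) \<le> \<epsilon> * Im (herglotz_kernel \<zeta> (of_real x * u))"
    unfolding EK by (simp add: b_def)
qed

lemma powr_diff_integral_lower:
  fixes f :: "real \<Rightarrow> real"
  assumes g: "0 < \<gamma>" and b: "0 \<le> b" "b \<le> \<rho>"
    and int: "(\<lambda>x. (\<rho> - x) powr (\<gamma> - 1) * f x) integrable_on {0..\<rho>}"
    and nonneg: "\<And>x. x \<in> {0..\<rho>} \<Longrightarrow> 0 \<le> f x"
    and lower: "\<And>x. x \<in> {\<rho> - b..\<rho>} \<Longrightarrow> m \<le> f x"
  shows "b powr \<gamma> / \<gamma> * m \<le> integral {0..\<rho>} (\<lambda>x. (\<rho> - x) powr (\<gamma> - 1) * f x)"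
proof -
  let ?w = "\<lambda>x. (\<rho> - x) powr (\<gamma> - 1)"
  let ?g = "\<lambda>x. indicator {\<rho> - b..\<rho>} x * (?w x * m)"
  have "(?g has_integral (b powr \<gamma> / \<gamma> * m)) {0..\<rho>}"
  proof (rule has_integral_on_superset)
    show "(?g has_integral (b powr \<gamma> / \<gamma> * m)) {\<rho> - b..\<rho>}"
      using has_integral_mult_left[OF has_integral_powr_diff[OF g b(1)], of \<rho> m]
      by (rule has_integral_eq[rotated]) simp
  qed (use b in auto)
  moreover have "integral {0..\<rho>} ?g \<le> integral {0..\<rho>} (\<lambda>x. ?w x * f x)"
  proof (rule integral_le)
    show "?g integrable_on {0..\<rho>}" using calculation by blast
    fix x assume x: "x \<in> {0..\<rho>}"
    show "?g x \<le> ?w x * f x"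
      using mult_left_mono[OF lower, of x "?w x"] mult_nonneg_nonneg[OF _ nonneg[OF x], of "?w x"]
      by (cases "x \<in> {\<rho> - b..\<rho>}") simp_all
  qed (rule int)
  ultimately show ?thesis using integral_unique by metis
qed

definition kernel_lower_const :: "real \<Rightarrow> real" where
  "kernel_lower_const \<gamma> = (if \<gamma> = 0 then 1/18 else 1 / (18 * \<gamma> * Gamma \<gamma>))"

lemma kernel_lower_const_pos: "0 \<le> \<gamma> \<Longrightarrow> 0 < kernel_lower_const \<gamma>"
  by (auto simp: kernel_lower_const_def intro!: mult_pos_pos)

lemma frac_integral_Im_herglotz_kernel_arc_lower:
  fixes t \<epsilon> \<gamma> :: real
  assumes t: "0 < t" "t \<le> 1/8" and e: "\<bar>\<epsilon>\<bar> = 1" and z0: "cmod \<zeta>0 = 1"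
    and A: "\<zeta> \<in> half_arc \<zeta>0 \<epsilon>" and g: "0 \<le> \<gamma>"
  defines "u \<equiv> arc_point \<zeta>0 \<epsilon> t"
  shows "kernel_lower_const \<gamma> * cmod (\<zeta> - u) powr (\<gamma> - 1)
           \<le> \<epsilon> * frac_integral \<gamma> (\<lambda>w. Im (herglotz_kernel \<zeta> w)) (of_real (1 - t/2) * u)"
proof -
  note P = Im_herglotz_kernel_arc_lower[OF t e z0 A, folded u_def]
  note G = half_arc_geometry[OF t e z0 A, folded u_def]
  define \<rho> where "\<rho> = 1 - t/2"
  define b where "b = cmod (\<zeta> - u)"
  define z where "z = of_real \<rho> * u"
  have r: "0 < \<rho>" "\<rho> < 1" using t by (auto simp: \<rho>_def)
  have zr: "cmod z = \<rho>" using G(1) r by (simp add: z_def norm_mult)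
  have arg: "of_real x * z / of_real \<rho> = of_real x * u" for x using r by (simp add: z_def)
  have bp: "0 < b" using G(4) t unfolding b_def by linarith
  have bsm: "b \<le> \<rho>" using G(5) t A by (simp add: b_def \<rho>_def half_arc_def)
  show ?thesis
  proof (cases "\<gamma> = 0")
    case True
    have "1 / (18 * b) \<le> \<epsilon> * Im (herglotz_kernel \<zeta> z)"
      using P(2)[of \<rho>] bp by (simp add: z_def b_def \<rho>_def)
    then show ?thesis using True bp
      by (simp add: kernel_lower_const_def powr_minus_divide frac_integral_def z_def b_def \<rho>_def)
  next
    case False
    then have gp: "0 < \<gamma>" using g by simp
    let ?f = "\<lambda>x. \<epsilon> * Im (herglotz_kernel \<zeta> (of_real x * u))"
    have "(\<lambda>x. (\<rho> - x) powr (\<gamma> - 1) *\<^sub>R herglotz_kernel \<zeta> (of_real x * u)) integrable_on {0..\<rho>}"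
      using radial_herglotz_kernel_integrable_on[of z \<zeta> \<gamma>] zr r A gp by (simp add: arg half_arc_def)
    from integrable_linear[OF this bounded_linear_Im]
    have "(\<lambda>x. (\<rho> - x) powr (\<gamma> - 1) * ?f x) integrable_on {0..\<rho>}"
      using integrable_on_mult_right[of _ _ \<epsilon>] by (simp add: o_def mult.left_commute)
    from powr_diff_integral_lower[OF gp less_imp_le[OF bp] bsm this, of "1 / (18 * b)"]
    have "b powr \<gamma> / \<gamma> * (1 / (18 * b)) \<le> \<epsilon> * integral {0..\<rho>} (\<lambda>x. (\<rho> - x) powr (\<gamma> - 1) * Im (herglotz_kernel \<zeta> (of_real x * u)))"
      using P by (auto simp: \<rho>_def b_def mult.left_commute)
    then have "(b powr \<gamma> / \<gamma> * (1 / (18 * b))) / Gamma \<gamma>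
        \<le> (\<epsilon> * integral {0..\<rho>} (\<lambda>x. (\<rho> - x) powr (\<gamma> - 1) * Im (herglotz_kernel \<zeta> (of_real x * u)))) / Gamma \<gamma>"
      using Gamma_real_pos[OF gp] by (intro divide_right_mono) auto
    also have "\<dots> = \<epsilon> * frac_integral \<gamma> (\<lambda>w. Im (herglotz_kernel \<zeta> w)) z"
      using False by (simp add: frac_integral_def zr arg)
    finally have "(b powr \<gamma> / \<gamma> * (1 / (18 * b))) / Gamma \<gamma> \<le> \<epsilon> * frac_integral \<gamma> (\<lambda>w. Im (herglotz_kernel \<zeta> w)) z" .
    moreover have "kernel_lower_const \<gamma> * b powr (\<gamma> - 1) = (b powr \<gamma> / \<gamma> * (1 / (18 * b))) / Gamma \<gamma>"
      using False bp by (simp add: kernel_lower_const_def powr_diff field_simps)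
    ultimately show ?thesis by (simp add: b_def z_def \<rho>_def)
  qed
qed

lemma test_point_in_stolz_star:
  fixes t \<epsilon> :: real
  assumes t: "0 < t" "t \<le> 1/8" and e: "\<bar>\<epsilon>\<bar> = 1" and z0: "cmod \<zeta>0 = 1"
  shows "of_real (1 - t/2) * arc_point \<zeta>0 \<epsilon> t \<in> stolz_star 5 \<zeta>0"
proof -
  define c where "c = Complex (sqrt (1 - t\<^sup>2)) (\<epsilon> * t)"
  define \<rho> where "\<rho> = 1 - t/2"
  define z where "z = of_real \<rho> * arc_point \<zeta>0 \<epsilon> t"
  note U = arc_rotation_bounds[OF t e, folded c_def]
  have r: "0 < \<rho>" "\<rho> < 1" using t by (auto simp: \<rho>_def)
  have zr: "cmod z = \<rho>" using U(1) z0 r by (simp add: z_def arc_point_def c_def[symmetric] norm_mult)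
  have zc: "z * cnj \<zeta>0 = of_real \<rho> * c"
    using z0 by (simp add: z_def arc_point_def c_def[symmetric] complex_norm_square[symmetric] algebra_simps)
  have "cmod (1 - of_real \<rho> * c) \<le> cmod (1 - of_real \<rho>) + cmod (of_real \<rho> * (1 - c))"
    using norm_triangle_ineq[of "1 - of_real \<rho>" "of_real \<rho> * (1 - c)"] by (simp add: algebra_simps)
  also have "\<dots> = (1 - \<rho>) + \<rho> * cmod (1 - c)"
  proof -
    have "cmod (1 - of_real \<rho> :: complex) = \<bar>1 - \<rho>\<bar>" by (metis norm_of_real of_real_1 of_real_diff)
    then show ?thesis using r by (simp add: norm_mult)
  qed
  also have "\<dots> \<le> t/2 + 1 * (3/2 * t)"
    using U(2) r by (intro add_mono mult_mono) (auto simp: \<rho>_def)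
  finally have A: "cmod (1 - of_real \<rho> * c) \<le> 2 * t" by simp
  have "cmod (z - \<zeta>0) = cmod ((z - \<zeta>0) * cnj \<zeta>0)" using z0 by (simp add: norm_mult)
  also have "(z - \<zeta>0) * cnj \<zeta>0 = of_real \<rho> * c - 1"
    using zc z0 by (simp add: algebra_simps complex_norm_square[symmetric])
  finally have B: "cmod (z - \<zeta>0) = cmod (1 - of_real \<rho> * c)" by (simp add: norm_minus_commute)
  have "z \<in> stolz_star 5 \<zeta>0"
    unfolding stolz_star_def stolz_def using zc zr r A B t by (simp add: \<rho>_def)
  then show ?thesis by (simp add: z_def \<rho>_def)
qed

lemma Im_frac_herglotz_kernel_half_arc_lower:
  fixes t \<epsilon> \<gamma> :: real
  assumes t: "0 < t" "t \<le> 1/8" and e: "\<bar>\<epsilon>\<bar> = 1" and z0: "cmod \<zeta>0 = 1"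
    and A: "\<zeta> \<in> half_arc \<zeta>0 \<epsilon>" and g: "0 \<le> \<gamma>" "\<gamma> < 1"
  defines "z \<equiv> of_real (1 - t/2) * arc_point \<zeta>0 \<epsilon> t"
  shows "kernel_lower_const \<gamma> * (cmod (\<zeta>0 - \<zeta>) + 3/2 * t) powr (\<gamma> - 1)
           \<le> \<epsilon> * Im (frac_herglotz_kernel \<gamma> z \<zeta>)"
proof -
  note G = half_arc_geometry[OF t e z0 A]
  have \<zeta>: "\<zeta> \<in> sphere 0 1" using A by (simp add: half_arc_def)
  have z1: "cmod z < 1"
    using test_point_in_stolz_star[OF t e z0] by (simp add: z_def stolz_star_def stolz_def)
  have "(cmod (\<zeta>0 - \<zeta>) + 3/2 * t) powr (\<gamma> - 1) \<le> cmod (\<zeta> - arc_point \<zeta>0 \<epsilon> t) powr (\<gamma> - 1)"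
    using G(4,5) t g by (intro powr_mono2') auto
  then have "kernel_lower_const \<gamma> * (cmod (\<zeta>0 - \<zeta>) + 3/2 * t) powr (\<gamma> - 1)
      \<le> kernel_lower_const \<gamma> * cmod (\<zeta> - arc_point \<zeta>0 \<epsilon> t) powr (\<gamma> - 1)"
    using kernel_lower_const_pos[OF g(1)] by (intro mult_left_mono) auto
  also have "\<dots> \<le> \<epsilon> * frac_integral \<gamma> (\<lambda>w. Im (herglotz_kernel \<zeta> w)) z"
    using frac_integral_Im_herglotz_kernel_arc_lower[OF t e z0 A g(1)] by (simp add: z_def)
  also have "\<dots> = \<epsilon> * Im (frac_herglotz_kernel \<gamma> z \<zeta>)"
    using frac_herglotz_kernel_eq[OF z1 \<zeta> g(1)] Im_frac_integral_herglotz_kernel[OF z1 \<zeta> g(1)] by simp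
  finally show ?thesis .
qed

lemma inverse_dist_powr_le_half_arcs:
  fixes \<zeta>0 \<zeta> :: complex
  assumes g: "\<gamma> < 1" and \<zeta>: "\<zeta> \<in> sphere 0 1"
  defines "h \<equiv> inverse (ennreal (cmod (\<zeta>0 - \<zeta>) powr (1 - \<gamma>)))"
  shows "h \<le> h * indicator (half_arc \<zeta>0 1) \<zeta> + h * indicator (half_arc \<zeta>0 (-1)) \<zeta>
           + ennreal (inverse ((1/8::real) powr (1 - \<gamma>)))"
proof (cases "cmod (\<zeta>0 - \<zeta>) \<le> 1/8")
  case True
  then have "\<zeta> \<in> half_arc \<zeta>0 1 \<or> \<zeta> \<in> half_arc \<zeta>0 (-1)" using \<zeta> by (auto simp: half_arc_def)
  then show ?thesis
  proof
    assume "\<zeta> \<in> half_arc \<zeta>0 1"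
    then show ?thesis by (simp add: add.assoc)
  next
    assume "\<zeta> \<in> half_arc \<zeta>0 (-1)"
    then show ?thesis by (simp add: add.commute add.left_commute)
  qed
next
  case False
  have "(1/8::real) powr (1 - \<gamma>) \<le> cmod (\<zeta>0 - \<zeta>) powr (1 - \<gamma>)"
    using False g by (intro powr_mono2) auto
  then have "inverse (cmod (\<zeta>0 - \<zeta>) powr (1 - \<gamma>)) \<le> inverse ((1/8::real) powr (1 - \<gamma>))"
    by (intro le_imp_inverse_le) auto
  moreover have "h = ennreal (inverse (cmod (\<zeta>0 - \<zeta>) powr (1 - \<gamma>)))"
    using False unfolding h_def by (subst inverse_ennreal) auto
  ultimately have "h \<le> ennreal (inverse ((1/8::real) powr (1 - \<gamma>)))" by (simp add: ennreal_leI)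
  then show ?thesis by (simp add: add_increasing)
qed

lemma nn_integral_half_arc_infinite:
  assumes psi: "finite_circle_measure \<psi>" and g: "\<gamma> < 1"
    and inf: "(\<integral>\<^sup>+ \<zeta>. inverse (ennreal (cmod (\<zeta>0 - \<zeta>) powr (1 - \<gamma>))) \<partial>\<psi>) = \<infinity>"
  shows "\<exists>\<epsilon>. \<bar>\<epsilon>\<bar> = 1 \<and>
    (\<integral>\<^sup>+ \<zeta>. inverse (ennreal (cmod (\<zeta>0 - \<zeta>) powr (1 - \<gamma>))) * indicator (half_arc \<zeta>0 \<epsilon>) \<zeta> \<partial>\<psi>) = \<infinity>"
proof (rule ccontr)
  let ?h = "\<lambda>\<zeta>. inverse (ennreal (cmod (\<zeta>0 - \<zeta>) powr (1 - \<gamma>)))"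
  let ?A = "half_arc \<zeta>0"
  assume "\<not> ?thesis"
  then have f1: "(\<integral>\<^sup>+ \<zeta>. ?h \<zeta> * indicator (?A 1) \<zeta> \<partial>\<psi>) < \<infinity>"
    and f2: "(\<integral>\<^sup>+ \<zeta>. ?h \<zeta> * indicator (?A (-1)) \<zeta> \<partial>\<psi>) < \<infinity>"
    by (auto simp: less_top[symmetric])
  have sP: "sets \<psi> = sets borel" and cP: "circle_borel_measure \<psi>"
    using psi by (auto simp: finite_circle_measure_def circle_borel_measure_def)
  have finP: "emeasure \<psi> UNIV < \<infinity>"
    using psi finite_measure.emeasure_finite[of \<psi> UNIV] by (simp add: finite_circle_measure_def less_top)
  let ?C = "inverse ((1/8::real) powr (1 - \<gamma>))"
  have "(\<integral>\<^sup>+ \<zeta>. ?h \<zeta> \<partial>\<psi>)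
      \<le> (\<integral>\<^sup>+ \<zeta>. ?h \<zeta> * indicator (?A 1) \<zeta> + ?h \<zeta> * indicator (?A (-1)) \<zeta> + ennreal ?C \<partial>\<psi>)"
    using AE_circle[OF cP] inverse_dist_powr_le_half_arcs[OF g] by (intro nn_integral_mono_AE) auto
  also have "\<dots> = (\<integral>\<^sup>+ \<zeta>. ?h \<zeta> * indicator (?A 1) \<zeta> \<partial>\<psi>) + (\<integral>\<^sup>+ \<zeta>. ?h \<zeta> * indicator (?A (-1)) \<zeta> \<partial>\<psi>)
      + (\<integral>\<^sup>+ \<zeta>. ennreal ?C \<partial>\<psi>)"
    by (subst nn_integral_add; (subst nn_integral_add)?) (auto simp: measurable_cong_sets[OF sP refl])
  also have "\<dots> < \<infinity>"
    using f1 f2 finP sets_eq_imp_space_eq[OF sP] by (simp add: ennreal_mult_less_top)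
  finally show False using inf by simp
qed

lemma nn_integral_half_arc_le:
  fixes t \<epsilon> \<gamma> K :: real
  assumes psi: "finite_circle_measure \<psi>" and t: "0 < t" "t \<le> 1/8" and e: "\<bar>\<epsilon>\<bar> = 1"
    and z0: "cmod \<zeta>0 = 1" and g: "0 \<le> \<gamma>" "\<gamma> < 1"
    and K: "\<forall>chi. circle_borel_measure chi \<and> measure_prec chi \<psi> \<longrightarrow>
        (\<forall>z \<in> stolz_star 5 \<zeta>0. \<bar>frac_integral \<gamma> (\<lambda>w. Im (herglotz chi w)) z\<bar> < K)"
  shows "(\<integral>\<^sup>+ \<zeta>. indicator (half_arc \<zeta>0 \<epsilon>) \<zeta> *
            ennreal (kernel_lower_const \<gamma> * (cmod (\<zeta>0 - \<zeta>) + 3/2 * t) powr (\<gamma> - 1)) \<partial>\<psi>) \<le> ennreal K"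
proof -
  let ?A = "half_arc \<zeta>0 \<epsilon>"
  let ?c = "\<lambda>\<zeta>. kernel_lower_const \<gamma> * (cmod (\<zeta>0 - \<zeta>) + 3/2 * t) powr (\<gamma> - 1)"
  define chi where "chi = density \<psi> (indicator ?A)"
  define z where "z = of_real (1 - t/2) * arc_point \<zeta>0 \<epsilon> t"
  have sP: "sets \<psi> = sets borel" and cP: "circle_borel_measure \<psi>"
    using psi by (auto simp: finite_circle_measure_def circle_borel_measure_def)
  note chi = density_indicator_circle_measure[OF cP half_arc_borel[of \<zeta>0 \<epsilon>], folded chi_def]
  have fin: "finite_circle_measure chi" by (rule finite_circle_measure_if_prec[OF chi(1) psi chi(2)])
  have zs: "z \<in> stolz_star 5 \<zeta>0" unfolding z_def by (rule test_point_in_stolz_star[OF t e z0])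
  have z1: "cmod z < 1" using zs by (simp add: stolz_star_def stolz_def)
  note R = frac_integral_herglotz[OF fin z1 g(1)]
  have low: "AE \<zeta> in chi. ?c \<zeta> \<le> \<epsilon> * Im (frac_herglotz_kernel \<gamma> z \<zeta>)"
    using chi(3) by eventually_elim (use Im_frac_herglotz_kernel_half_arc_lower[OF t e z0 _ g] in \<open>simp add: z_def\<close>)
  have c0: "0 \<le> ?c \<zeta>" for \<zeta> using kernel_lower_const_pos[OF g(1)] by simp
  have "(\<integral>\<^sup>+ \<zeta>. indicator ?A \<zeta> * ennreal (?c \<zeta>) \<partial>\<psi>) = (\<integral>\<^sup>+ \<zeta>. ennreal (?c \<zeta>) \<partial>chi)"
    unfolding chi_def by (rule nn_integral_density[symmetric]) (auto simp: measurable_cong_sets[OF sP refl])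
  also have "\<dots> \<le> (\<integral>\<^sup>+ \<zeta>. ennreal (\<epsilon> * Im (frac_herglotz_kernel \<gamma> z \<zeta>)) \<partial>chi)"
    using low by (intro nn_integral_mono_AE) (auto elim!: eventually_mono intro: ennreal_leI)
  also have "\<dots> = ennreal (\<integral>\<zeta>. \<epsilon> * Im (frac_herglotz_kernel \<gamma> z \<zeta>) \<partial>chi)"
    using R(2) low c0 by (intro nn_integral_eq_integral) (auto elim!: eventually_mono intro: order_trans)
  also have "(\<integral>\<zeta>. \<epsilon> * Im (frac_herglotz_kernel \<gamma> z \<zeta>) \<partial>chi) = \<epsilon> * frac_integral \<gamma> (\<lambda>w. Im (herglotz chi w)) z"
    using R frac_integral_Im_herglotz[OF fin z1 g(1)] by simp
  also have "\<dots> \<le> \<bar>frac_integral \<gamma> (\<lambda>w. Im (herglotz chi w)) z\<bar>"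
    using abs_ge_self[of "\<epsilon> * frac_integral \<gamma> (\<lambda>w. Im (herglotz chi w)) z"] e by (simp add: abs_mult)
  finally show ?thesis using K chi(1,2) zs by (meson ennreal_leI less_imp_le order_trans)
qed

lemma tendsto_ennreal_powr_smoothed:
  fixes c \<delta> d :: real
  assumes g: "\<gamma> < 1" and c: "0 < c" and \<delta>: "0 < \<delta>" and d: "0 \<le> d"
  shows "(\<lambda>n::nat. ennreal (c * (d + \<delta> / (real n + 1)) powr (\<gamma> - 1)))
           \<longlonglongrightarrow> ennreal c * inverse (ennreal (d powr (1 - \<gamma>)))"
proof (cases "d = 0")
  case True
  have "filterlim (\<lambda>n::nat. c * (\<delta> / (real n + 1)) powr (\<gamma> - 1)) at_top at_top"
    using g \<delta> c by real_asymp
  then show ?thesis using True c by (simp add: ennreal_tendsto_top_eq_at_top ennreal_mult_top)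
next
  case False
  then have "(\<lambda>n::nat. (d + \<delta> / (real n + 1)) powr (\<gamma> - 1)) \<longlonglongrightarrow> d powr (\<gamma> - 1)"
    using d \<delta> by real_asymp
  then have "(\<lambda>n::nat. ennreal (c * (d + \<delta> / (real n + 1)) powr (\<gamma> - 1))) \<longlonglongrightarrow> ennreal (c * d powr (\<gamma> - 1))"
    by (intro tendsto_ennrealI tendsto_mult_left)
  moreover have "ennreal (c * d powr (\<gamma> - 1)) = ennreal c * inverse (ennreal (d powr (1 - \<gamma>)))"
    using False d c by (simp add: inverse_ennreal ennreal_mult powr_minus[symmetric])
  ultimately show ?thesis by simp
qed

lemma nn_integral_dist_powr_le_if_smoothed_le:
  fixes M :: "complex measure" and c \<delta> :: real
  assumes M: "sets M = sets borel" and A: "A \<in> sets borel" and g: "\<gamma> < 1"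
    and c: "0 < c" and \<delta>: "0 < \<delta>"
    and bound: "\<And>s. 0 < s \<Longrightarrow> s \<le> \<delta> \<Longrightarrow>
      (\<integral>\<^sup>+ \<zeta>. indicator A \<zeta> * ennreal (c * (cmod (\<zeta>0 - \<zeta>) + s) powr (\<gamma> - 1)) \<partial>M) \<le> B"
  shows "ennreal c * (\<integral>\<^sup>+ \<zeta>. inverse (ennreal (cmod (\<zeta>0 - \<zeta>) powr (1 - \<gamma>))) * indicator A \<zeta> \<partial>M) \<le> B"
proof -
  let ?h = "\<lambda>\<zeta>. inverse (ennreal (cmod (\<zeta>0 - \<zeta>) powr (1 - \<gamma>)))"
  let ?s = "\<lambda>n::nat. \<delta> / (real n + 1)"
  define f where "f = (\<lambda>n \<zeta>. indicator A \<zeta> * ennreal (c * (cmod (\<zeta>0 - \<zeta>) + ?s n) powr (\<gamma> - 1)))"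
  define u where "u = (\<lambda>\<zeta>. indicator A \<zeta> * (ennreal c * ?h \<zeta>))"
  have fm: "f n \<in> borel_measurable M" for n
    unfolding f_def using A by (simp add: measurable_cong_sets[OF M refl])
  have inc: "incseq f"
  proof (rule incseq_SucI, rule le_funI)
    fix n \<zeta>
    have "?s (Suc n) \<le> ?s n" using \<delta> by (intro divide_left_mono) auto
    then have "(cmod (\<zeta>0 - \<zeta>) + ?s n) powr (\<gamma> - 1) \<le> (cmod (\<zeta>0 - \<zeta>) + ?s (Suc n)) powr (\<gamma> - 1)"
      using g \<delta> by (intro powr_mono2') (auto intro: add_nonneg_pos)
    then show "f n \<zeta> \<le> f (Suc n) \<zeta>"
      unfolding f_def using c by (auto intro!: mult_left_mono ennreal_leI simp: indicator_def)
  qed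
  have lim: "(\<lambda>n. f n \<zeta>) \<longlonglongrightarrow> u \<zeta>" for \<zeta>
    using tendsto_ennreal_powr_smoothed[OF g c \<delta> norm_ge_zero, of "\<zeta>0 - \<zeta>"]
    by (cases "\<zeta> \<in> A") (simp_all add: f_def u_def)
  have "(\<lambda>n. integral\<^sup>N M (f n)) \<longlonglongrightarrow> integral\<^sup>N M u"
    by (rule nn_integral_LIMSEQ[OF inc fm lim])
  moreover have "integral\<^sup>N M (f n) \<le> B" for n
    unfolding f_def using \<delta> by (intro bound) (auto simp: field_simps)
  ultimately have "integral\<^sup>N M u \<le> B"
    by (intro LIMSEQ_le_const2) auto
  moreover have "integral\<^sup>N M u = ennreal c * (\<integral>\<^sup>+ \<zeta>. ?h \<zeta> * indicator A \<zeta> \<partial>M)"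
    unfolding u_def using A
    by (subst nn_integral_cmult[symmetric]) (auto simp: measurable_cong_sets[OF M refl] ac_simps)
  ultimately show ?thesis by simp
qed

lemma Im_bounded_imp_integral_finite:
  assumes psi: "finite_circle_measure \<psi>" and g: "0 \<le> \<gamma>" "\<gamma> < 1" and z0: "cmod \<zeta>0 = 1"
    and H: "\<forall>\<sigma>>1. \<exists>K>0. \<forall>chi. circle_borel_measure chi \<and> measure_prec chi \<psi> \<longrightarrow>
        (\<forall>z \<in> stolz_star \<sigma> \<zeta>0. \<bar>frac_integral \<gamma> (\<lambda>w. Im (herglotz chi w)) z\<bar> < K)"
  shows "(\<integral>\<^sup>+ \<zeta>. inverse (ennreal (cmod (\<zeta>0 - \<zeta>) powr (1 - \<gamma>))) \<partial>\<psi>) < \<infinity>"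
proof (rule ccontr)
  let ?h = "\<lambda>\<zeta>. inverse (ennreal (cmod (\<zeta>0 - \<zeta>) powr (1 - \<gamma>)))"
  assume "\<not> ?thesis"
  then obtain \<epsilon> where e: "\<bar>\<epsilon>\<bar> = 1"
    and inf: "(\<integral>\<^sup>+ \<zeta>. ?h \<zeta> * indicator (half_arc \<zeta>0 \<epsilon>) \<zeta> \<partial>\<psi>) = \<infinity>"
    using nn_integral_half_arc_infinite[OF psi g(2)] by (auto simp: less_top[symmetric])
  obtain K where K: "\<forall>chi. circle_borel_measure chi \<and> measure_prec chi \<psi> \<longrightarrow>
        (\<forall>z \<in> stolz_star 5 \<zeta>0. \<bar>frac_integral \<gamma> (\<lambda>w. Im (herglotz chi w)) z\<bar> < K)"
    using H[rule_format, of 5] by auto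
  have "ennreal (kernel_lower_const \<gamma>) * (\<integral>\<^sup>+ \<zeta>. ?h \<zeta> * indicator (half_arc \<zeta>0 \<epsilon>) \<zeta> \<partial>\<psi>) \<le> ennreal K"
  proof (rule nn_integral_dist_powr_le_if_smoothed_le[where \<delta>="3/16"])
    fix s :: real assume "0 < s" "s \<le> 3/16"
    then show "(\<integral>\<^sup>+ \<zeta>. indicator (half_arc \<zeta>0 \<epsilon>) \<zeta> *
        ennreal (kernel_lower_const \<gamma> * (cmod (\<zeta>0 - \<zeta>) + s) powr (\<gamma> - 1)) \<partial>\<psi>) \<le> ennreal K"
      using nn_integral_half_arc_le[OF psi _ _ e z0 g K, of "2/3 * s"] by simp
  qed (use psi g kernel_lower_const_pos in \<open>auto simp: finite_circle_measure_def circle_borel_measure_def\<close>)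
  then show False using inf kernel_lower_const_pos[OF g(1)] by (simp add: ennreal_mult_top top_unique)
qed

theorem theorem3:
  fixes psi :: "real \<Rightarrow> real" and \<gamma> :: real and \<zeta>0 :: complex
  assumes "mono_on {-pi..pi} psi"
    and "0 \<le> \<gamma>" and "\<gamma> < 1"
    and "cmod \<zeta>0 = 1"
  defines "\<psi> \<equiv> circle_stieltjes_measure psi"
  shows
   "((\<forall>\<sigma>>1. \<exists>K>0. \<forall>chi. circle_borel_measure chi \<and> measure_prec chi \<psi> \<longrightarrow>
        (\<forall>z \<in> stolz_star \<sigma> \<zeta>0. cmod (frac_integral \<gamma> (herglotz chi) z) < K))
     \<longleftrightarrow>
     (\<forall>\<sigma>>1. \<exists>K>0. \<forall>chi. circle_borel_measure chi \<and> measure_prec chi \<psi> \<longrightarrow>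
        (\<forall>z \<in> stolz_star \<sigma> \<zeta>0. \<bar>frac_integral \<gamma> (\<lambda>w. Im (herglotz chi w)) z\<bar> < K)))
    \<and>
    ((\<forall>\<sigma>>1. \<exists>K>0. \<forall>chi. circle_borel_measure chi \<and> measure_prec chi \<psi> \<longrightarrow>
        (\<forall>z \<in> stolz_star \<sigma> \<zeta>0. \<bar>frac_integral \<gamma> (\<lambda>w. Im (herglotz chi w)) z\<bar> < K))
     \<longleftrightarrow>
     (\<integral>\<^sup>+ \<zeta>. inverse (ennreal (cmod (\<zeta>0 - \<zeta>) powr (1 - \<gamma>))) \<partial>\<psi>) < \<infinity>)"
proof -
  have psi: "finite_circle_measure \<psi>"
    unfolding \<psi>_def by (rule finite_circle_measure_circle_stieltjes_measure[OF assms(1)])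
  note to_Im = frac_integral_herglotz_bounded_imp_Im_bounded[OF psi assms(2)]
  note to_finite = Im_bounded_imp_integral_finite[OF psi assms(2-4)]
  note to_bounded = integral_finite_imp_frac_integral_herglotz_bounded[OF psi assms(2-4)]
  show ?thesis
  proof (intro conjI iffI)
  qed (erule to_Im | erule to_bounded[OF to_finite] | erule to_finite | erule to_Im[OF to_bounded])+
qed

end
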